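(* Assume (A1)–(A8) and consider the sequences generated by Algorithm PS. Then: (a) there exists $\xi>0$ with $\pi_k=\gamma^{-1}\|v^k\|^2+\sum_{i=1}^{n-1}\|u_i^k\|^2\le\xi^2$ for all $k\ge0$; (b) $G_iz^k-x_i^k\to0$ and $w_i^k-y_i^k\to0$ (strongly) for $i=1,\dots,n$; (c) $\sum_{i=1}^nG_i^*y_i^k\to0$ and $x_i^k-G_ix_n^k\to0$ (strongly) for $i=1,\dots,n-1$.
   Context: Standing setting. Let $\mathcal H_0,\dots,\mathcal H_{n-1}$ be real Hilbert spaces ($n\ge2$) and $\mathcal H_n:=\mathcal H_0$. Conventions: $0\cdot\infty=0$, $r\cdot\infty=\infty$ for $r>0$, $1/\infty=0$, $1/0=\infty$. For each $i=1,\dots,n$: (A1) $G_i:\mathcal H_0\to\mathcal H_i$ is bounded linear and $G_n=I$; (A2) $A_i:\mathcal H_i\rightrightarrows\mathcal H_i$ is maximal monotone; (A3) $B_i:\mathcal H_i\to\mathcal H_i$ is monotone and $\ell_i$-Lipschitz, $\ell_i\in[0,\infty)$; (A4) $C_i:\mathcal H_i\to\mathcal H_i$ is $\beta_i$-cocoercive with $\beta_i\in(0,\infty]$, i.e. $\langle x-y,C_ix-C_iy\rangle\ge\beta_i\|C_ix-C_iy\|^2$ for all $x,y$ (so $\beta_i=\infty$ means $C_i$ is constant, and then $1/(4\beta_i)=0$); (A5) $D_i:\mathcal H_i\to\mathcal H_i$ is monotone and continuously differentiable with $\|D_i'(x)-D_i'(y)\|\le m_i\|x-y\|$ for all $x,y$,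 $m_i\in[0,\infty)$; (A6) with $T_i:=A_i+B_i+C_i+D_i$, the inclusion $0\in\sum_{i=1}^nG_i^*T_i(G_iz)$ has at least one solution $z\in\mathcal H_0$; (A7) there is $\mathcal I_D\subset\{1,\dots,n\}$ with $m_i>0$ for $i\in\mathcal I_D$ and $m_i=0$, $D_i=0$ for $i\notin\mathcal I_D$. Notation: $D_{i,(u)}(x):=D_i(u)+D_i'(u)(x-u)$; for a maximal monotone $S$, $J_S:=(S+I)^{-1}$. $\boldsymbol{\mathcal H}:=\mathcal H_0\times\mathcal H_1\times\cdots\times\mathcal H_{n-1}$ with inner product $\langle p,\tilde p\rangle_\gamma:=\gamma\langle z,\tilde z\rangle+\sum_{i=1}^{n-1}\langle w_i,\tilde w_i\rangle$ for $p=(z,w_1,\dots,w_{n-1})$, $\tilde p=(\tilde z,\tilde w_1,\dots,\tilde w_{n-1})$, and norm $\|\cdot\|_\gamma$; for such $p$ one writes $w_n:=-\sum_{i=1}^{n-1}G_i^*w_i$. The extended solution set is $\mathcal S:=\{p\in\boldsymbol{\mathcal H}: w_i\in T_i(G_iz),\ i=1,\dots,n\}$ (with $w_n$ as just defined). Algorithm PS. Input: $(z^0,w_1^0,\dots,w_{n-1}^0)\in\boldsymbol{\mathcal H}$, $0<\underline\tau<\overline\tau<2$, $0<\underline\theta<\overline\theta<2$, $\hat\rho>0$, $\hat\delta>0$, $\gamma>0$; $w_n^0:=-\sum_{i=1}^{n-1}G_i^*w_i^0$. For $k=0,1,2,\dots$: for each $i=1,\dots,n$ define $(\rho_i^k,x_i^k,y_i^k)$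 as follows. (i) If $w_i^k\in T_i(G_iz^k)$: $\rho_i^k=\hat\rho$, $x_i^k=G_iz^k$, $y_i^k=w_i^k$. (ii) Otherwise, if $i\in\mathcal I_D$: $\rho_i^k>0$ and $x_i^k=J_{\rho_i^k(A_i+D_{i,(G_iz^k)})}\big(G_iz^k+\rho_i^kw_i^k-\rho_i^k(B_i+C_i)(G_iz^k)\big)$ satisfy $\underline\theta\le4\ell_i^2(\rho_i^k)^2+(\beta_i^{-1}+\hat\delta)\rho_i^k+(m_i\rho_i^k\|x_i^k-G_iz^k\|)^2\le\overline\theta$, and $y_i^k=\frac{G_iz^k-x_i^k}{\rho_i^k}+w_i^k+[B_i(x_i^k)-B_i(G_iz^k)]+[D_i(x_i^k)-D_{i,(G_iz^k)}(x_i^k)]$. (iii) Otherwise ($i\notin\mathcal I_D$): some $\rho_i^k>0$ is chosen, $x_i^k=J_{\rho_i^kA_i}\big(G_iz^k+\rho_i^kw_i^k-\rho_i^k(B_i+C_i)(G_iz^k)\big)$ and $y_i^k=\frac{G_iz^k-x_i^k}{\rho_i^k}+w_i^k+[B_i(x_i^k)-B_i(G_iz^k)]$. Then set $u_i^k=x_i^k-G_ix_n^k$ ($i=1,\dots,n-1$), $v^k=\sum_{i=1}^nG_i^*y_i^k$, $\varphi_k=\langle z^k,v^k\rangle+\sum_{i=1}^{n-1}\langle w_i^k,u_i^k\rangle-\sum_{i=1}^n\big[\langle x_i^k,y_i^k\rangle+\frac1{4\beta_i}\|x_i^k-G_iz^k\|^2\big]$, $\pi_k=\gamma^{-1}\|v^k\|^2+\sum_{i=1}^{n-1}\|u_i^k\|^2$.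 If $\varphi_k>0$: choose $\tau_k\in[\underline\tau,\overline\tau]$, $\alpha_k=\tau_k\varphi_k/\pi_k$, $z^{k+1}=z^k-\gamma^{-1}\alpha_kv^k$, $w_i^{k+1}=w_i^k-\alpha_ku_i^k$ ($i=1,\dots,n-1$); otherwise $z^{k+1}=z^k$, $w_i^{k+1}=w_i^k$. Finally $w_n^{k+1}=-\sum_{i=1}^{n-1}G_i^*w_i^{k+1}$. (A8): for each $i\in\{1,\dots,n\}\setminus\mathcal I_D$ there are constants $\underline\rho_i,\overline\rho_i$ with $0<\underline\rho_i\le\rho_i^k\le\overline\rho_i<1/\big(\frac1{4\beta_i}+\ell_i\big)$ for all $k\ge0$ whenever $\rho_i^k$ is chosen in case (iii). *)

theory Defs
  imports "HOL-Analysis.Analysis"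
begin

text \<open>Hilbert spaces H_i are modelled as closed linear subspaces of one ambient
real Hilbert space (type of class real_inner + complete_space).\<close>

definition mono_op :: "'a::real_inner set \<Rightarrow> ('a \<Rightarrow> 'a set) \<Rightarrow> bool" where
  "mono_op H S \<longleftrightarrow> (\<forall>x. S x \<noteq> {} \<longrightarrow> x \<in> H) \<and> (\<forall>x\<in>H. S x \<subseteq> H) \<and>
     (\<forall>x y p q. p \<in> S x \<longrightarrow> q \<in> S y \<longrightarrow> 0 \<le> inner (x - y) (p - q))"

definition max_mono_op :: "'a::real_inner set \<Rightarrow> ('a \<Rightarrow> 'a set) \<Rightarrow> bool" where
  "max_mono_op H S \<longleftrightarrow> mono_op H S \<and>
     (\<forall>S'. mono_op H S' \<and> (\<forall>x. S x \<subseteq> S' x) \<longrightarrow> S' = S)"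

definition mono_fun :: "'a::real_inner set \<Rightarrow> ('a \<Rightarrow> 'a) \<Rightarrow> bool" where
  "mono_fun H F \<longleftrightarrow> (\<forall>x\<in>H. F x \<in> H) \<and> (\<forall>x\<in>H. \<forall>y\<in>H. 0 \<le> inner (x - y) (F x - F y))"

text \<open>beta-cocoercive with beta in (0, infinity], using extended-real arithmetic
(in ereal, infinity * 0 = 0 and infinity * r = infinity for r > 0).\<close>
definition cocoercive :: "'a::real_inner set \<Rightarrow> ereal \<Rightarrow> ('a \<Rightarrow> 'a) \<Rightarrow> bool" where
  "cocoercive H b F \<longleftrightarrow> (\<forall>x\<in>H. F x \<in> H) \<and>
     (\<forall>x\<in>H. \<forall>y\<in>H. b * ereal ((norm (F x - F y))\<^sup>2) \<le> ereal (inner (x - y) (F x - F y)))"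

definition op_sum :: "('a::real_vector \<Rightarrow> 'a set) \<Rightarrow> ('a \<Rightarrow> 'a) \<Rightarrow> ('a \<Rightarrow> 'a) \<Rightarrow> ('a \<Rightarrow> 'a) \<Rightarrow> 'a \<Rightarrow> 'a set" where
  "op_sum S F1 F2 F3 = (\<lambda>x. (\<lambda>s. s + F1 x + F2 x + F3 x) ` S x)"

definition op_add :: "('a::real_vector \<Rightarrow> 'a set) \<Rightarrow> ('a \<Rightarrow> 'a) \<Rightarrow> 'a \<Rightarrow> 'a set" where
  "op_add S F = (\<lambda>x. (\<lambda>s. s + F x) ` S x)"

definition op_scale :: "real \<Rightarrow> ('a::real_vector \<Rightarrow> 'a set) \<Rightarrow> 'a \<Rightarrow> 'a set" where
  "op_scale r S = (\<lambda>x. (\<lambda>s. r *\<^sub>R s) ` S x)"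

text \<open>Resolvent J_S = (S + I)^{-1}, as a set-valued map.\<close>
definition resolvent :: "('a::real_vector \<Rightarrow> 'a set) \<Rightarrow> 'a \<Rightarrow> 'a set" where
  "resolvent S r = {x. r \<in> (\<lambda>s. s + x) ` S x}"

definition lin_at :: "('a::real_vector \<Rightarrow> 'a) \<Rightarrow> ('a \<Rightarrow> 'a \<Rightarrow> 'a) \<Rightarrow> 'a \<Rightarrow> 'a \<Rightarrow> 'a" where
  "lin_at F F' u = (\<lambda>x. F u + F' u (x - u))"

end

theory Submission
  imports Defs
begin

text \<open>Fix a point \<open>p\<^sup>* = (z\<^sup>*, w\<^sup>*)\<close> of the extended solution set. The value at \<open>p\<^sup>*\<close> of the
affine function \<open>\<phi>\<^sub>k\<close> is nonpositive, by monotonicity of \<open>A\<^sub>i, B\<^sub>i, D\<^sub>i\<close> and cocoercivity of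
\<open>C\<^sub>i\<close>; so each update is a relaxed projection onto a separating halfspace and
\<open>\<parallel>p\<^sup>k - p\<^sup>*\<parallel>\<^sub>\<gamma>\<^sup>2\<close> drops by at least \<open>\<tau>(2 - \<tau>) \<phi>\<^sub>k\<^sup>2 / \<pi>\<^sub>k\<close>. Hence the iterates are bounded and
\<open>\<Sum>\<^sub>k \<phi>\<^sub>k\<^sup>2 / \<pi>\<^sub>k < \<infinity>\<close>. The step-size rules make the \<open>i\<close>-th summand of \<open>\<phi>\<^sub>k\<close> at least
\<open>\<kappa> d\<^sub>i\<^sup>2 / \<rho>\<^sub>i\<close>, where \<open>d\<^sub>i = \<parallel>G\<^sub>iz\<^sup>k - x\<^sub>i\<^sup>k\<parallel>\<close>, while \<open>\<parallel>v\<^sup>k\<parallel>\<close> and \<open>\<parallel>u\<^sub>i\<^sup>k\<parallel>\<close> are at most a constant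
times \<open>max\<^sub>i d\<^sub>i / \<rho>\<^sub>i\<close>. Comparing the two bounds on \<open>\<phi>\<^sub>k\<close> at the index realising the maximum
shows that \<open>max\<^sub>i d\<^sub>i / \<rho>\<^sub>i\<close>, and with it \<open>\<pi>\<^sub>k\<close>, stays bounded. Therefore \<open>\<phi>\<^sub>k \<rightarrow> 0\<close>, which
forces \<open>d\<^sub>i \<rightarrow> 0\<close>; as the \<open>\<rho>\<^sub>i\<close> are then bounded away from zero, \<open>d\<^sub>i / \<rho>\<^sub>i \<rightarrow> 0\<close> and all
the remaining limits follow.\<close>

lemma finite_family_small_constant:
  assumes "finite I" "\<And>i. i \<in> I \<Longrightarrow> \<exists>e>0. \<forall>e'. 0 < e' \<longrightarrow> e' \<le> e \<longrightarrow> P i (e'::real)"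
  shows "\<exists>e>0. \<forall>i\<in>I. P i e"
proof -
  have "\<forall>i\<in>I. \<forall>\<^sub>F e in at_right 0. P i e"
  proof
    fix i assume "i \<in> I"
    then obtain e where "e > 0" "\<forall>e'. 0 < e' \<longrightarrow> e' \<le> e \<longrightarrow> P i e'" using assms(2) by blast
    then show "\<forall>\<^sub>F e in at_right 0. P i e" by (intro eventually_at_rightI[of 0 e]) auto
  qed
  then have "\<forall>\<^sub>F e in at_right 0. 0 < e \<and> (\<forall>i\<in>I. P i e)"
    by (intro eventually_conj eventually_at_right_less eventually_ball_finite[OF assms(1)])
  then show ?thesis using eventually_happens'[OF trivial_limit_at_right_real] by blast
qed

lemma finite_family_large_constant:
  assumes "finite I" "\<And>i. i \<in> I \<Longrightarrow> \<exists>K. \<forall>K'\<ge>K. P i (K'::real)"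
  shows "\<exists>K>0. \<forall>i\<in>I. P i K"
proof -
  have "\<forall>i\<in>I. \<forall>\<^sub>F K in at_top. P i K"
    using assms(2) by (auto simp: eventually_at_top_linorder)
  then have "\<forall>\<^sub>F K in at_top. 0 < K \<and> (\<forall>i\<in>I. P i K)"
    by (intro eventually_conj eventually_gt_at_top eventually_ball_finite[OF assms(1)])
  then show ?thesis using eventually_happens'[OF trivial_limit_at_top_linorder] by blast
qed

lemma bounded_linear_family_uniform_bound:
  assumes "finite I" "\<forall>i\<in>I. bounded_linear (f i)"
  shows "\<exists>K>0. \<forall>i\<in>I. \<forall>x. norm (f i x) \<le> K * norm x"
proof (rule finite_family_large_constant[OF assms(1)])
  fix i assume "i \<in> I"
  then obtain K0 where K0: "\<forall>x. norm (f i x) \<le> norm x * K0"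
    using assms(2) bounded_linear.bounded by blast
  have "norm (f i x) \<le> K * norm x" if "K0 \<le> K" for K x
    using K0 mult_left_mono[OF that norm_ge_zero, of x] by (metis mult.commute order_trans)
  then show "\<exists>K0. \<forall>K\<ge>K0. \<forall>x. norm (f i x) \<le> K * norm x" by blast
qed

lemma sum_atLeastAtMost_split_last:
  fixes n :: nat
  assumes "1 \<le> n"
  shows "(\<Sum>i=1..n. f i) = (\<Sum>i=1..n-1. f i) + (f n :: 'b::comm_monoid_add)"
proof -
  have "(\<Sum>i=1..Suc (n - 1). f i) = (\<Sum>i=1..n-1. f i) + f (Suc (n - 1))"
    by (simp add: sum.cl_ivl_Suc)
  then show ?thesis using assms by simp
qed

lemma power2_norm_diff_scaleR:
  fixes a b :: "'a::real_inner"
  shows "(norm (a - c *\<^sub>R b))\<^sup>2 = (norm a)\<^sup>2 - 2 * c * inner a b + c\<^sup>2 * (norm b)\<^sup>2"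
  unfolding power2_norm_eq_inner
  by (simp add: inner_diff_left inner_diff_right inner_commute power2_eq_square algebra_simps)

lemma null_sequence_if_norm_le:
  fixes f :: "nat \<Rightarrow> 'b::real_normed_vector"
  assumes "\<And>k. norm (f k) \<le> g k" "g \<longlonglongrightarrow> 0"
  shows "f \<longlonglongrightarrow> 0"
  using Lim_null_comparison[of f g sequentially] assms by (simp add: always_eventually)

lemma linearization_error_le:
  fixes F :: "'a::real_inner \<Rightarrow> 'a" and F' :: "'a \<Rightarrow> 'a \<Rightarrow> 'a"
  assumes S: "subspace S"
    and der: "\<forall>p\<in>S. (F has_derivative F' p) (at p within S)"
    and lip: "\<forall>p\<in>S. \<forall>q\<in>S. \<forall>h\<in>S. norm (F' p h - F' q h) \<le> M * norm (p - q) * norm h"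
    and u: "u \<in> S" and x: "x \<in> S"
  shows "norm (F x - lin_at F F' u x) \<le> M / 2 * (norm (x - u))\<^sup>2"
proof -
  define e where "e = x - u"
  have e: "e \<in> S" using S u x by (simp add: e_def subspace_diff)
  have seg: "\<And>t. u + t *\<^sub>R e \<in> S" using S u e by (simp add: subspace_add subspace_scale)
  have bl: "\<And>p. p \<in> S \<Longrightarrow> bounded_linear (F' p)"
    using der has_derivative_bounded_linear by blast
  \<comment> \<open>Mean value inequality for \<open>t \<mapsto> F (u + t e) - t F' u e\<close> against \<open>t \<mapsto> M \<parallel>e\<parallel>\<^sup>2 t\<^sup>2 / 2\<close> on \<open>[0, 1]\<close>.\<close>
  define f where "f = (\<lambda>t::real. F (u + t *\<^sub>R e) - t *\<^sub>R F' u e)"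
  define f' where "f' = (\<lambda>t::real. F' (u + t *\<^sub>R e) e - F' u e)"
  define g where "g = (\<lambda>t::real. M * (norm e)\<^sup>2 * t\<^sup>2 / 2)"
  define g' where "g' = (\<lambda>t::real. M * (norm e)\<^sup>2 * t)"
  have f_deriv: "(f has_vector_derivative f' t) (at t)" for t
  proof -
    have line: "((\<lambda>t. u + t *\<^sub>R e) has_derivative (\<lambda>h. h *\<^sub>R e)) (at t)"
      by (auto intro!: derivative_eq_intros)
    have F_deriv: "(F has_derivative F' (u + t *\<^sub>R e)) (at (u + t *\<^sub>R e) within range (\<lambda>t. u + t *\<^sub>R e))"
      using der seg by (meson has_derivative_subset image_subset_iff)
    have chain: "((\<lambda>t. F (u + t *\<^sub>R e)) has_derivative (\<lambda>h. F' (u + t *\<^sub>R e) (h *\<^sub>R e))) (at t)"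
      using diff_chain_within[OF line F_deriv] by (simp add: o_def image_def full_SetCompr_eq)
    have "F' (u + t *\<^sub>R e) (h *\<^sub>R e) = h *\<^sub>R F' (u + t *\<^sub>R e) e" for h
      using bl[OF seg] linear_scale[OF bounded_linear.linear] by (metis linear_cmul)
    then have chain': "((\<lambda>t. F (u + t *\<^sub>R e)) has_derivative (\<lambda>h. h *\<^sub>R F' (u + t *\<^sub>R e) e)) (at t)"
      using chain by simp
    show ?thesis unfolding f_def f'_def has_vector_derivative_def
      by (rule derivative_eq_intros chain' | simp add: algebra_simps)+
  qed
  have g_deriv: "(g has_vector_derivative g' t) (at t)" for t
    unfolding g_def g'_def has_vector_derivative_def
    by (auto intro!: derivative_eq_intros simp: algebra_simps)
  have f'_le: "norm (f' t) \<le> g' t" if "0 < t" for t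
  proof -
    have "norm (f' t) \<le> M * norm (u + t *\<^sub>R e - u) * norm e"
      unfolding f'_def using lip seg u e by blast
    also have "\<dots> = g' t" using that by (simp add: g'_def power2_eq_square)
    finally show ?thesis .
  qed
  have f_cont: "continuous_on {0..1} f"
    using f_deriv by (meson continuous_at_imp_continuous_on has_vector_derivative_continuous)
  have g_cont: "continuous_on {0..1} g"
    unfolding g_def by (intro continuous_intros) auto
  have "norm (f 1 - f 0) \<le> g 1 - g 0"
    by (rule differentiable_bound_general[OF _ f_cont g_cont f_deriv g_deriv f'_le]) auto
  moreover have "f 1 - f 0 = F x - lin_at F F' u x"
    by (simp add: f_def e_def lin_at_def algebra_simps)
  moreover have "g 1 - g 0 = M / 2 * (norm (x - u))\<^sup>2" by (simp add: g_def e_def)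
  ultimately show ?thesis by simp
qed

lemma real_of_ereal_quarter_inverse:
  assumes "0 < (b::ereal)"
  shows "real_of_ereal (1 / (4 * b)) = real_of_ereal (inverse b) / 4"
  using assms by (cases b) (auto simp: divide_ereal_def)

lemma real_of_ereal_inverse_nonneg: "0 < (b::ereal) \<Longrightarrow> 0 \<le> real_of_ereal (inverse b)"
  by (cases b) auto

lemma ereal_less_inverse_imp_mult_less_one:
  assumes "0 < (b::ereal)" "0 \<le> l" "ereal r < 1 / (1 / (4 * b) + ereal l)"
  shows "r * (real_of_ereal (inverse b) / 4 + l) < 1"
proof (cases b)
  case (real rb)
  then have rb: "rb > 0" using assms by simp
  show ?thesis
  proof (cases "l = 0 \<and> 1 / (4 * rb) = 0")
    case True
    then show ?thesis using rb by simp
  next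
    case False
    then have pos: "1 / (4 * rb) + l > 0" using rb assms(2) by (smt (verit) divide_pos_pos)
    have "1 / (4 * b) + ereal l = ereal (1 / (4 * rb) + l)"
      using real rb by (simp add: divide_ereal_def inverse_eq_divide)
    then have "r < 1 / (1 / (4 * rb) + l)"
      using assms(3) pos by (simp add: divide_ereal_def inverse_eq_divide)
    then have "r * (1 / (4 * rb) + l) < 1" using pos by (simp add: field_simps)
    then show ?thesis using real rb by (simp add: field_simps inverse_eq_divide)
  qed
next
  case PInf
  show ?thesis
  proof (cases "l = 0")
    case False
    then have "ereal r < ereal (1 / l)" using assms PInf by (simp add: divide_ereal_def inverse_eq_divide)
    then show ?thesis using PInf False assms(2) by (simp add: field_simps inverse_eq_divide)
  qed (use PInf in simp)
qed (use assms in simp)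

lemma cocoercive_real:
  assumes "0 < (b::ereal)" "cocoercive H b C" "p \<in> H" "s \<in> H"
  shows "(norm (C p - C s))\<^sup>2 \<le> real_of_ereal (inverse b) * inner (p - s) (C p - C s)"
    and "0 \<le> inner (p - s) (C p - C s)"
proof -
  have h: "b * ereal ((norm (C p - C s))\<^sup>2) \<le> ereal (inner (p - s) (C p - C s))"
    using assms unfolding cocoercive_def by blast
  have "(norm (C p - C s))\<^sup>2 \<le> real_of_ereal (inverse b) * inner (p - s) (C p - C s)
      \<and> 0 \<le> inner (p - s) (C p - C s)"
  proof (cases b)
    case (real rb)
    then have "rb > 0" "rb * (norm (C p - C s))\<^sup>2 \<le> inner (p - s) (C p - C s)"
      using assms h by simp_all
    moreover have "0 \<le> rb * (norm (C p - C s))\<^sup>2" using \<open>rb > 0\<close> by simp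
    ultimately have "0 \<le> inner (p - s) (C p - C s)" by linarith
    with \<open>rb > 0\<close> \<open>rb * _ \<le> _\<close> show ?thesis using real by (simp add: field_simps inverse_eq_divide)
  next
    case PInf
    then have "C p - C s = 0"
      using h by (cases "C p - C s = 0") auto
    then show ?thesis using h PInf by simp
  qed (use assms in simp)
  then show "(norm (C p - C s))\<^sup>2 \<le> real_of_ereal (inverse b) * inner (p - s) (C p - C s)"
    and "0 \<le> inner (p - s) (C p - C s)" by auto
qed

text \<open>This is why \<open>\<phi>\<^sub>k\<close> carries the correction \<open>\<parallel>x\<^sub>i - G\<^sub>iz\<parallel>\<^sup>2 / (4\<beta>\<^sub>i)\<close>: the algorithm evaluates
\<open>C\<^sub>i\<close> at \<open>G\<^sub>iz\<close> rather than at \<open>x\<^sub>i\<close>.\<close>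

lemma cocoercive_inner_shift_ge:
  assumes "0 < (b::ereal)" "cocoercive H b C" "p \<in> H" "s \<in> H"
  shows "0 \<le> inner (x - s) (C p - C s) + real_of_ereal (inverse b) / 4 * (norm (x - p))\<^sup>2"
proof -
  define bi where "bi = real_of_ereal (inverse b)"
  define c where "c = C p - C s"
  have h: "(norm c)\<^sup>2 \<le> bi * inner (p - s) c" "0 \<le> inner (p - s) c" "0 \<le> bi"
    using cocoercive_real[OF assms] real_of_ereal_inverse_nonneg[OF assms(1)]
    by (auto simp: bi_def c_def)
  have split: "inner (x - s) c = inner (x - p) c + inner (p - s) c"
    by (simp add: inner_diff_left)
  have cs: "- (norm (x - p) * norm c) \<le> inner (x - p) c"
    using Cauchy_Schwarz_ineq2[of "x - p" c] by (simp add: abs_le_iff)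
  show ?thesis
  proof (cases "bi = 0")
    case True
    then show ?thesis using h unfolding bi_def c_def by simp
  next
    case False
    then have bp: "bi > 0" using h by simp
    have "(norm c)\<^sup>2 / bi \<le> inner (p - s) c" using h bp by (simp add: field_simps)
    moreover have "norm (x - p) * norm c \<le> bi / 4 * (norm (x - p))\<^sup>2 + (norm c)\<^sup>2 / bi"
    proof -
      have "bi * (bi / 4 * (norm (x - p))\<^sup>2 + (norm c)\<^sup>2 / bi - norm (x - p) * norm c)
          = (bi * norm (x - p) / 2 - norm c)\<^sup>2"
        using bp by (simp add: field_simps power2_eq_square)
      then have "0 \<le> bi * (bi / 4 * (norm (x - p))\<^sup>2 + (norm c)\<^sup>2 / bi - norm (x - p) * norm c)"
        by simp
      then show ?thesis using bp by (simp add: zero_le_mult_iff)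
    qed
    ultimately show ?thesis unfolding bi_def[symmetric] c_def[symmetric] split using cs by linarith
  qed
qed

text \<open>With \<open>a = \<ell>\<rho>, b = m\<rho>d, c = \<rho>/\<beta>\<close> this turns the step-size test of case (ii) into a
lower bound on \<open>1 - \<ell>\<rho> - m\<rho>d/2 - \<rho>/(4\<beta>)\<close> that does not depend on \<open>k\<close>.\<close>

lemma one_sub_sqrt_half_le:
  fixes a b c \<theta> :: real
  assumes "0 \<le> a" "0 \<le> b" "0 \<le> c" "4 * a\<^sup>2 + b\<^sup>2 + c \<le> \<theta>" "\<theta> < 2"
  shows "1 - sqrt (\<theta> / 2) \<le> 1 - a - b / 2 - c / 4"
proof -
  define T where "T = sqrt (\<theta> / 2)"
  define t where "t = a + b / 2"
  have "0 \<le> \<theta>" using assms by (smt (verit) zero_le_power2)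
  then have T2: "T\<^sup>2 = \<theta> / 2" and "0 \<le> T" and "T < 1"
    using assms(5) unfolding T_def by simp_all
  have "(4 * a\<^sup>2 + b\<^sup>2) / 2 - t\<^sup>2 = (a - b / 2)\<^sup>2"
    unfolding t_def by (simp add: power2_eq_square field_simps)
  then have "t\<^sup>2 \<le> (4 * a\<^sup>2 + b\<^sup>2) / 2" by (smt (verit) zero_le_power2)
  then have tt: "2 * t\<^sup>2 \<le> 4 * a\<^sup>2 + b\<^sup>2" by simp
  then have "t\<^sup>2 \<le> T\<^sup>2" using assms(3,4) unfolding T2 by linarith
  then have "t \<le> T" using \<open>0 \<le> T\<close> assms(1,2) unfolding t_def by (simp add: power2_le_iff_abs_le)
  then have "0 \<le> (T - t) * (1 - (T + t) / 2)" using \<open>T < 1\<close> by (intro mult_nonneg_nonneg) auto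
  then have "1 - T \<le> 1 - t - (\<theta> - 2 * t\<^sup>2) / 4" using T2 by (simp add: field_simps power2_eq_square)
  moreover have "c / 4 \<le> (\<theta> - 2 * t\<^sup>2) / 4" using tt assms(4) by simp
  ultimately show ?thesis unfolding T_def[symmetric] t_def by linarith
qed

lemma resolvent_op_scale_op_add_E:
  "x \<in> resolvent (op_scale \<rho> (op_add A L)) r \<Longrightarrow> \<exists>a\<in>A x. r = \<rho> *\<^sub>R (a + L x) + x"
  by (auto simp: resolvent_def op_scale_def op_add_def)

lemma resolvent_op_scale_E:
  "x \<in> resolvent (op_scale \<rho> A) r \<Longrightarrow> \<exists>a\<in>A x. r = \<rho> *\<^sub>R a + x"
  by (auto simp: resolvent_def op_scale_def)

lemma resolvent_step_solve:
  fixes p w b c v x :: "'a::real_vector"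
  assumes "\<rho> \<noteq> 0" "p + \<rho> *\<^sub>R w - \<rho> *\<^sub>R (b + c) = \<rho> *\<^sub>R v + x"
  shows "(1 / \<rho>) *\<^sub>R (p - x) = v - w + b + c"
proof -
  have "p - x = \<rho> *\<^sub>R (v - w + b + c)"
    using assms(2) by (simp add: algebra_simps)
  then show ?thesis using assms(1) by simp
qed

lemma max_mono_op_domain: "max_mono_op H A \<Longrightarrow> a \<in> A x \<Longrightarrow> x \<in> H \<and> a \<in> H"
  unfolding max_mono_op_def mono_op_def by blast

lemma max_mono_op_monotone: "max_mono_op H A \<Longrightarrow> a \<in> A x \<Longrightarrow> b \<in> A y \<Longrightarrow> 0 \<le> inner (x - y) (a - b)"
  unfolding max_mono_op_def mono_op_def by blast

definition adjoint_on :: "'a::real_inner set \<Rightarrow> 'a set \<Rightarrow> ('a \<Rightarrow> 'a) \<Rightarrow> ('a \<Rightarrow> 'a) \<Rightarrow> bool" where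
  "adjoint_on S T G G' \<longleftrightarrow> (\<forall>q\<in>T. G' q \<in> S \<and> (\<forall>p\<in>S. inner (G' q) p = inner q (G p)))"

lemma eq_0_if_orthogonal_to_set:
  assumes "a \<in> S" "\<And>p. p \<in> S \<Longrightarrow> inner a p = 0"
  shows "a = 0"
  using assms by (metis inner_eq_zero_iff)

lemma adjoint_on_diff:
  assumes "adjoint_on S T G G'" "subspace S" "subspace T" "q1 \<in> T" "q2 \<in> T"
  shows "G' (q1 - q2) = G' q1 - G' q2"
proof -
  have "q1 - q2 \<in> T" using assms by (simp add: subspace_diff)
  then have "G' (q1 - q2) - (G' q1 - G' q2) = 0"
    using assms by (intro eq_0_if_orthogonal_to_set[of _ S])
      (auto simp: adjoint_on_def subspace_diff inner_diff_left inner_diff_right)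
  then show ?thesis by simp
qed

lemma adjoint_on_identity:
  assumes "adjoint_on S S G G'" "subspace S" "\<forall>p\<in>S. G p = p" "q \<in> S"
  shows "G' q = q"
proof -
  have "G' q - q = 0"
    using assms by (intro eq_0_if_orthogonal_to_set[of _ S]) (auto simp: adjoint_on_def subspace_diff inner_diff_left)
  then show ?thesis by simp
qed

lemma adjoint_on_norm_le:
  assumes "adjoint_on S T G G'" "\<forall>p. norm (G p) \<le> K * norm p" "0 \<le> K" "q \<in> T"
  shows "norm (G' q) \<le> K * norm q"
proof -
  have "(norm (G' q))\<^sup>2 = inner q (G (G' q))"
    using assms(1,4) by (simp add: adjoint_on_def power2_norm_eq_inner)
  also have "\<dots> \<le> norm q * norm (G (G' q))" by (rule norm_cauchy_schwarz)
  also have "\<dots> \<le> norm q * (K * norm (G' q))" using assms(2) by (simp add: mult_left_mono)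
  finally have "norm (G' q) * norm (G' q) \<le> (K * norm q) * norm (G' q)"
    by (simp add: power2_eq_square algebra_simps)
  then show ?thesis
    using assms(3) by (cases "norm (G' q) = 0") (auto simp: mult_le_cancel_right)
qed

section \<open>Iterates of the projective splitting method\<close>

locale projective_splitting =
  fixes n :: nat
    and H :: "nat \<Rightarrow> 'a::{real_inner,complete_space} set"
    and G Gadj :: "nat \<Rightarrow> 'a \<Rightarrow> 'a"
    and A :: "nat \<Rightarrow> 'a \<Rightarrow> 'a set"
    and B C D :: "nat \<Rightarrow> 'a \<Rightarrow> 'a"
    and D' :: "nat \<Rightarrow> 'a \<Rightarrow> 'a \<Rightarrow> 'a"
    and ell m :: "nat \<Rightarrow> real"
    and beta :: "nat \<Rightarrow> ereal"
    and ID :: "nat set"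
    and z :: "nat \<Rightarrow> 'a"
    and w x y u :: "nat \<Rightarrow> nat \<Rightarrow> 'a"
    and rho :: "nat \<Rightarrow> nat \<Rightarrow> real"
    and v :: "nat \<Rightarrow> 'a"
    and phi pik tau alpha :: "nat \<Rightarrow> real"
    and tau_lo tau_up theta_lo theta_up rho_hat delta_hat gamma :: real
  assumes n2: "n \<ge> 2"
    and H_sub: "\<forall>i\<le>n. subspace (H i) \<and> closed (H i)"
    and H_n: "H n = H 0"
    and A1: "\<forall>i\<in>{1..n}. bounded_linear (G i) \<and> G i ` H 0 \<subseteq> H i"
    and A1n: "\<forall>p\<in>H 0. G n p = p"
    and adj: "\<forall>i\<in>{1..n}. \<forall>q\<in>H i. Gadj i q \<in> H 0 \<and>
                (\<forall>p\<in>H 0. inner (Gadj i q) p = inner q (G i p))"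
    and A2: "\<forall>i\<in>{1..n}. max_mono_op (H i) (A i)"
    and A3: "\<forall>i\<in>{1..n}. mono_fun (H i) (B i) \<and> 0 \<le> ell i \<and>
                (\<forall>p\<in>H i. \<forall>q\<in>H i. norm (B i p - B i q) \<le> ell i * norm (p - q))"
    and A4: "\<forall>i\<in>{1..n}. 0 < beta i \<and> cocoercive (H i) (beta i) (C i)"
    and A5: "\<forall>i\<in>{1..n}. mono_fun (H i) (D i) \<and> 0 \<le> m i \<and>
                (\<forall>p\<in>H i. (D i has_derivative D' i p) (at p within H i)) \<and>
                (\<forall>p\<in>H i. \<forall>q\<in>H i. \<forall>h\<in>H i.
                    norm (D' i p h - D' i q h) \<le> m i * norm (p - q) * norm h)"
    and A6: "\<exists>zs\<in>H 0. \<exists>ws. (\<forall>i\<in>{1..n}. ws i \<in> op_sum (A i) (B i) (C i) (D i) (G i zs)) \<and>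
                (\<Sum>i=1..n. Gadj i (ws i)) = 0"
    and A7: "ID \<subseteq> {1..n} \<and> (\<forall>i\<in>ID. 0 < m i) \<and>
                (\<forall>i\<in>{1..n} - ID. m i = 0 \<and> (\<forall>p\<in>H i. D i p = 0))"
    and params: "0 < tau_lo \<and> tau_lo < tau_up \<and> tau_up < 2 \<and>
                 0 < theta_lo \<and> theta_lo < theta_up \<and> theta_up < 2 \<and>
                 0 < rho_hat \<and> 0 < delta_hat \<and> 0 < gamma"
    and init: "z 0 \<in> H 0 \<and> (\<forall>i\<in>{1..n-1}. w 0 i \<in> H i)"
    and w_n: "\<forall>k. w k n = - (\<Sum>i=1..n-1. Gadj i (w k i))"
    and case_i: "\<forall>k. \<forall>i\<in>{1..n}. w k i \<in> op_sum (A i) (B i) (C i) (D i) (G i (z k)) \<longrightarrow>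
                   rho k i = rho_hat \<and> x k i = G i (z k) \<and> y k i = w k i"
    and case_ii: "\<forall>k. \<forall>i\<in>ID. w k i \<notin> op_sum (A i) (B i) (C i) (D i) (G i (z k)) \<longrightarrow>
                   0 < rho k i \<and>
                   x k i \<in> resolvent (op_scale (rho k i) (op_add (A i) (lin_at (D i) (D' i) (G i (z k)))))
                      (G i (z k) + rho k i *\<^sub>R w k i - rho k i *\<^sub>R (B i (G i (z k)) + C i (G i (z k)))) \<and>
                   theta_lo \<le> 4 * (ell i)\<^sup>2 * (rho k i)\<^sup>2 + (real_of_ereal (inverse (beta i)) + delta_hat) * rho k i
                              + (m i * rho k i * norm (x k i - G i (z k)))\<^sup>2 \<and>
                   4 * (ell i)\<^sup>2 * (rho k i)\<^sup>2 + (real_of_ereal (inverse (beta i)) + delta_hat) * rho k i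
                              + (m i * rho k i * norm (x k i - G i (z k)))\<^sup>2 \<le> theta_up \<and>
                   y k i = (1 / rho k i) *\<^sub>R (G i (z k) - x k i) + w k i
                           + (B i (x k i) - B i (G i (z k)))
                           + (D i (x k i) - lin_at (D i) (D' i) (G i (z k)) (x k i))"
    and case_iii: "\<forall>k. \<forall>i\<in>{1..n} - ID. w k i \<notin> op_sum (A i) (B i) (C i) (D i) (G i (z k)) \<longrightarrow>
                   0 < rho k i \<and>
                   x k i \<in> resolvent (op_scale (rho k i) (A i))
                      (G i (z k) + rho k i *\<^sub>R w k i - rho k i *\<^sub>R (B i (G i (z k)) + C i (G i (z k)))) \<and>
                   y k i = (1 / rho k i) *\<^sub>R (G i (z k) - x k i) + w k i
                           + (B i (x k i) - B i (G i (z k)))"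
    and u_def: "\<forall>k. \<forall>i\<in>{1..n-1}. u k i = x k i - G i (x k n)"
    and v_def: "\<forall>k. v k = (\<Sum>i=1..n. Gadj i (y k i))"
    and phi_def: "\<forall>k. phi k = inner (z k) (v k) + (\<Sum>i=1..n-1. inner (w k i) (u k i))
                   - (\<Sum>i=1..n. inner (x k i) (y k i)
                        + real_of_ereal (1 / (4 * beta i)) * (norm (x k i - G i (z k)))\<^sup>2)"
    and pi_def: "\<forall>k. pik k = (1 / gamma) * (norm (v k))\<^sup>2 + (\<Sum>i=1..n-1. (norm (u k i))\<^sup>2)"
    and update: "\<forall>k. (0 < phi k \<longrightarrow>
                      tau_lo \<le> tau k \<and> tau k \<le> tau_up \<and> alpha k = tau k * phi k / pik k \<and>
                      z (Suc k) = z k - (alpha k / gamma) *\<^sub>R v k \<and>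
                      (\<forall>i\<in>{1..n-1}. w (Suc k) i = w k i - alpha k *\<^sub>R u k i)) \<and>
                    (\<not> 0 < phi k \<longrightarrow> z (Suc k) = z k \<and> (\<forall>i\<in>{1..n-1}. w (Suc k) i = w k i))"
    and A8: "\<forall>i\<in>{1..n} - ID. \<exists>rlo rup. 0 < rlo \<and> rlo \<le> rup \<and>
                ereal rup < 1 / (1 / (4 * beta i) + ereal (ell i)) \<and>
                (\<forall>k. w k i \<notin> op_sum (A i) (B i) (C i) (D i) (G i (z k)) \<longrightarrow>
                      rlo \<le> rho k i \<and> rho k i \<le> rup)"
begin

lemma subspace_H: "i \<le> n \<Longrightarrow> subspace (H i)"
  using H_sub by blast

lemma n_mem: "n \<in> {1..n}"
  using n2 by simp

lemma G_in_H: "i \<in> {1..n} \<Longrightarrow> p \<in> H 0 \<Longrightarrow> G i p \<in> H i"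
  using A1 by blast

lemma G_n: "p \<in> H 0 \<Longrightarrow> G n p = p"
  using A1n by blast

lemma adjoint_on_G: "i \<in> {1..n} \<Longrightarrow> adjoint_on (H 0) (H i) (G i) (Gadj i)"
  using adj unfolding adjoint_on_def by blast

lemma Gadj_in_H: "i \<in> {1..n} \<Longrightarrow> q \<in> H i \<Longrightarrow> Gadj i q \<in> H 0"
  using adj by blast

lemma inner_Gadj: "i \<in> {1..n} \<Longrightarrow> q \<in> H i \<Longrightarrow> p \<in> H 0 \<Longrightarrow> inner (Gadj i q) p = inner q (G i p)"
  using adj by blast

lemma Gadj_diff:
  "i \<in> {1..n} \<Longrightarrow> q1 \<in> H i \<Longrightarrow> q2 \<in> H i \<Longrightarrow> Gadj i (q1 - q2) = Gadj i q1 - Gadj i q2"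
  using adjoint_on_diff[OF adjoint_on_G] subspace_H by simp

lemma Gadj_n: "q \<in> H 0 \<Longrightarrow> Gadj n q = q"
  using adjoint_on_identity[of "H 0" "G n" "Gadj n"] adjoint_on_G[OF n_mem] subspace_H[of 0] A1n H_n
  by simp

lemma G_norm_le: "\<exists>K>0. \<forall>i\<in>{1..n}. \<forall>p. norm (G i p) \<le> K * norm p"
  using A1 by (intro bounded_linear_family_uniform_bound) auto

lemma Gadj_norm_le: "\<exists>K>0. \<forall>i\<in>{1..n}. \<forall>q\<in>H i. norm (Gadj i q) \<le> K * norm q"
  using G_norm_le adjoint_on_norm_le[OF adjoint_on_G] by (meson less_imp_le)

text \<open>\<open>inv_beta i\<close> is \<open>0\<close> when \<open>\<beta>\<^sub>i = \<infinity>\<close>, matching the convention \<open>1/\<infinity> = 0\<close>.\<close>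

definition inv_beta :: "nat \<Rightarrow> real" where
  "inv_beta i = real_of_ereal (inverse (beta i))"

lemma inv_beta_nonneg: "i \<in> {1..n} \<Longrightarrow> 0 \<le> inv_beta i"
  using A4 real_of_ereal_inverse_nonneg unfolding inv_beta_def by blast

lemma quarter_inv_beta: "i \<in> {1..n} \<Longrightarrow> real_of_ereal (1 / (4 * beta i)) = inv_beta i / 4"
  using A4 real_of_ereal_quarter_inverse unfolding inv_beta_def by blast

lemma op_sum_in_H:
  assumes "i \<in> {1..n}" "a \<in> A i p" "q \<in> H i"
  shows "a + B i p + C i q + D i p \<in> H i"
proof -
  have "p \<in> H i \<and> a \<in> H i" using max_mono_op_domain A2 assms by blast
  then show ?thesis
    using A3 A4 A5 assms subspace_H[of i] unfolding mono_fun_def cocoercive_def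
    by (simp add: subspace_add)
qed

text \<open>What each of the cases (i)--(iii) of the algorithm produces; \<open>r\<close> is the Taylor remainder
of \<open>D\<^sub>i\<close> at \<open>G\<^sub>iz\<^sup>k\<close> (and \<open>0\<close> outside case (ii)).\<close>

definition step_relations :: "nat \<Rightarrow> nat \<Rightarrow> bool" where
  "step_relations k i \<longleftrightarrow> x k i \<in> H i \<and> 0 < rho k i \<and>
    (\<exists>a\<in>A i (x k i). y k i = a + B i (x k i) + C i (G i (z k)) + D i (x k i)) \<and>
    (\<exists>r. y k i - w k i = (1 / rho k i) *\<^sub>R (G i (z k) - x k i) + (B i (x k i) - B i (G i (z k))) + r
         \<and> norm r \<le> m i / 2 * (norm (G i (z k) - x k i))\<^sup>2)"

lemma step_relations_solved:
  assumes zk: "z k \<in> H 0" and i: "i \<in> {1..n}"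
    and solved: "w k i \<in> op_sum (A i) (B i) (C i) (D i) (G i (z k))"
  shows "step_relations k i"
proof -
  have "rho k i = rho_hat" "x k i = G i (z k)" "y k i = w k i" using case_i i solved by blast+
  moreover obtain a where "a \<in> A i (G i (z k))"
    "w k i = a + B i (G i (z k)) + C i (G i (z k)) + D i (G i (z k))"
    using solved unfolding op_sum_def by auto
  ultimately show ?thesis
    using G_in_H[OF i zk] params A5 i unfolding step_relations_def by (auto intro!: exI[of _ 0])
qed

lemma step_relations_linearized:
  assumes zk: "z k \<in> H 0" and i: "i \<in> ID"
    and unsolved: "w k i \<notin> op_sum (A i) (B i) (C i) (D i) (G i (z k))"
  shows "step_relations k i"
proof -
  define p where "p = G i (z k)"
  define L where "L = lin_at (D i) (D' i) p"
  have i': "i \<in> {1..n}" using A7 i by blast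
  have c: "0 < rho k i"
    "x k i \<in> resolvent (op_scale (rho k i) (op_add (A i) L))
        (p + rho k i *\<^sub>R w k i - rho k i *\<^sub>R (B i p + C i p))"
    "y k i = (1 / rho k i) *\<^sub>R (p - x k i) + w k i + (B i (x k i) - B i p) + (D i (x k i) - L (x k i))"
    using case_ii i unsolved unfolding p_def L_def by blast+
  obtain a where a: "a \<in> A i (x k i)"
    "p + rho k i *\<^sub>R w k i - rho k i *\<^sub>R (B i p + C i p) = rho k i *\<^sub>R (a + L (x k i)) + x k i"
    using resolvent_op_scale_op_add_E[OF c(2)] by blast
  have xH: "x k i \<in> H i" using max_mono_op_domain A2 i' a(1) by blast
  have "(1 / rho k i) *\<^sub>R (p - x k i) = a + L (x k i) - w k i + B i p + C i p"
    using resolvent_step_solve[OF _ a(2)] c(1) by simp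
  then have "y k i = a + B i (x k i) + C i p + D i (x k i)"
    unfolding c(3) by (simp add: algebra_simps)
  moreover have "norm (D i (x k i) - L (x k i)) \<le> m i / 2 * (norm (p - x k i))\<^sup>2"
    using linearization_error_le[OF subspace_H, of i "D i" "D' i" "m i" p "x k i"] A5 i' G_in_H[OF i' zk] xH
    unfolding L_def p_def by (simp add: norm_minus_commute)
  ultimately show ?thesis unfolding step_relations_def p_def[symmetric]
    using xH c(1) a(1) c(3) by (auto intro!: exI[of _ "D i (x k i) - L (x k i)"])
qed

lemma step_relations_plain:
  assumes i: "i \<in> {1..n} - ID"
    and unsolved: "w k i \<notin> op_sum (A i) (B i) (C i) (D i) (G i (z k))"
  shows "step_relations k i"
proof -
  define p where "p = G i (z k)"
  have c: "0 < rho k i"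
    "x k i \<in> resolvent (op_scale (rho k i) (A i)) (p + rho k i *\<^sub>R w k i - rho k i *\<^sub>R (B i p + C i p))"
    "y k i = (1 / rho k i) *\<^sub>R (p - x k i) + w k i + (B i (x k i) - B i p)"
    using case_iii i unsolved unfolding p_def by blast+
  obtain a where a: "a \<in> A i (x k i)"
    "p + rho k i *\<^sub>R w k i - rho k i *\<^sub>R (B i p + C i p) = rho k i *\<^sub>R a + x k i"
    using resolvent_op_scale_E[OF c(2)] by blast
  have xH: "x k i \<in> H i" using max_mono_op_domain A2 i a(1) by blast
  have D0: "D i (x k i) = 0" using A7 i xH by blast
  have "(1 / rho k i) *\<^sub>R (p - x k i) = a - w k i + B i p + C i p"
    using resolvent_step_solve[OF _ a(2)] c(1) by simp
  then have "y k i = a + B i (x k i) + C i p + D i (x k i)"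
    unfolding c(3) D0 by (simp add: algebra_simps)
  then show ?thesis unfolding step_relations_def p_def[symmetric]
    using xH c(1) a(1) c(3) A5 i by (auto intro!: exI[of _ 0])
qed

lemma step_properties:
  assumes "z k \<in> H 0" "i \<in> {1..n}"
  shows "step_relations k i"
  using step_relations_solved[OF assms] step_relations_linearized[OF assms(1)]
    step_relations_plain assms(2) by blast

lemma y_in_H_if_z_in_H:
  assumes zk: "z k \<in> H 0" and i: "i \<in> {1..n}"
  shows "y k i \<in> H i"
proof -
  obtain a where "a \<in> A i (x k i)" "y k i = a + B i (x k i) + C i (G i (z k)) + D i (x k i)"
    using step_properties[OF zk i] unfolding step_relations_def by blast
  then show ?thesis using op_sum_in_H[OF i _ G_in_H[OF i zk]] by simp
qed

lemma iterates_in_H: "z k \<in> H 0 \<and> (\<forall>i\<in>{1..n-1}. w k i \<in> H i)"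
proof (induction k)
  case 0
  then show ?case using init by simp
next
  case (Suc k)
  then have zk: "z k \<in> H 0" and wk: "\<forall>i\<in>{1..n-1}. w k i \<in> H i" by auto
  have "y k i \<in> H i" if "i \<in> {1..n}" for i
    using y_in_H_if_z_in_H[OF zk that] .
  then have vH: "v k \<in> H 0"
    unfolding v_def[rule_format] using Gadj_in_H subspace_H[of 0] by (auto intro!: subspace_sum)
  have xn: "x k n \<in> H 0" using step_properties[OF zk n_mem] H_n unfolding step_relations_def by auto
  have uH: "u k i \<in> H i" if i: "i \<in> {1..n-1}" for i
  proof -
    have i': "i \<in> {1..n}" using i by auto
    show ?thesis using u_def i step_properties[OF zk i'] G_in_H[OF i' xn] subspace_H[of i] i'
      unfolding step_relations_def by (simp add: subspace_diff)
  qed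
  show ?case
  proof (cases "0 < phi k")
    case True
    then have "z (Suc k) = z k - (alpha k / gamma) *\<^sub>R v k"
      "\<forall>i\<in>{1..n-1}. w (Suc k) i = w k i - alpha k *\<^sub>R u k i" using update by blast+
    then show ?thesis using zk vH wk uH subspace_H
      by (auto simp: subspace_diff subspace_scale)
  next
    case False
    then show ?thesis using update zk wk by simp
  qed
qed

lemma z_in_H: "z k \<in> H 0"
  using iterates_in_H by blast

lemma w_in_H:
  assumes "i \<in> {1..n}"
  shows "w k i \<in> H i"
proof (cases "i = n")
  case True
  have "(\<Sum>i=1..n-1. Gadj i (w k i)) \<in> H 0"
    using iterates_in_H Gadj_in_H subspace_H[of 0] by (auto intro!: subspace_sum)
  then show ?thesis using True w_n H_n subspace_H[of 0] by (simp add: subspace_neg)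
next
  case False
  then show ?thesis using assms iterates_in_H by auto
qed

lemma x_in_H: "i \<in> {1..n} \<Longrightarrow> x k i \<in> H i"
  using step_properties[OF z_in_H] unfolding step_relations_def by blast

lemma rho_pos: "i \<in> {1..n} \<Longrightarrow> 0 < rho k i"
  using step_properties[OF z_in_H] unfolding step_relations_def by blast

lemma y_eq:
  assumes "i \<in> {1..n}"
  obtains a where "a \<in> A i (x k i)" "y k i = a + B i (x k i) + C i (G i (z k)) + D i (x k i)"
  using step_properties[OF z_in_H assms] unfolding step_relations_def by blast

lemma y_sub_w_eq:
  assumes "i \<in> {1..n}"
  obtains r where "y k i - w k i = (1 / rho k i) *\<^sub>R (G i (z k) - x k i) + (B i (x k i) - B i (G i (z k))) + r"
    "norm r \<le> m i / 2 * (norm (G i (z k) - x k i))\<^sup>2"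
  using step_properties[OF z_in_H assms] unfolding step_relations_def by blast

lemma y_in_H: "i \<in> {1..n} \<Longrightarrow> y k i \<in> H i"
  using y_in_H_if_z_in_H[OF z_in_H] .

lemma Gadj_w_sum: "(\<Sum>i=1..n. Gadj i (w k i)) = 0"
  using sum_atLeastAtMost_split_last[of n "\<lambda>i. Gadj i (w k i)"] n2 Gadj_n w_in_H[OF n_mem] H_n w_n
  by simp

subsection \<open>The separating affine function\<close>

definition coco_term :: "nat \<Rightarrow> nat \<Rightarrow> real" where
  "coco_term k i = real_of_ereal (1 / (4 * beta i)) * (norm (x k i - G i (z k)))\<^sup>2"

definition resid :: "nat \<Rightarrow> nat \<Rightarrow> real" where
  "resid k i = norm (G i (z k) - x k i)"

lemma coco_term_eq: "i \<in> {1..n} \<Longrightarrow> coco_term k i = inv_beta i / 4 * (resid k i)\<^sup>2"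
  unfolding coco_term_def resid_def using quarter_inv_beta by (simp add: norm_minus_commute)

text \<open>The separator \<open>\<phi>\<^sub>k\<close> is affine in \<open>(z, w\<^sub>1, \<dots>, w\<^sub>n\<^sub>-\<^sub>1)\<close>; at any point with
\<open>\<Sum> G\<^sub>i\<^sup>* w\<^sub>i = 0\<close> it takes the following symmetric form.\<close>

lemma phi_affine_identity:
  assumes \<zeta>: "\<zeta> \<in> H 0" and \<omega>: "\<forall>i\<in>{1..n}. \<omega> i \<in> H i"
    and sum0: "(\<Sum>i=1..n. Gadj i (\<omega> i)) = 0"
  shows "inner \<zeta> (v k) + (\<Sum>i=1..n-1. inner (\<omega> i) (u k i)) - (\<Sum>i=1..n. inner (x k i) (y k i) + c i)
       = (\<Sum>i=1..n. inner (G i \<zeta> - x k i) (y k i - \<omega> i) - c i)"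
proof -
  have v_part: "inner \<zeta> (v k) = (\<Sum>i=1..n. inner (G i \<zeta>) (y k i))"
    unfolding v_def[rule_format] inner_sum_right
    using inner_Gadj[OF _ y_in_H \<zeta>] by (simp add: inner_commute)
  have "(\<Sum>i=1..n. inner (G i \<zeta>) (\<omega> i)) = (\<Sum>i=1..n. inner (Gadj i (\<omega> i)) \<zeta>)"
    using inner_Gadj[OF _ _ \<zeta>] \<omega> by (simp add: inner_commute)
  also have "\<dots> = inner (\<Sum>i=1..n. Gadj i (\<omega> i)) \<zeta>" by (simp add: inner_sum_left)
  finally have G_part: "(\<Sum>i=1..n. inner (G i \<zeta>) (\<omega> i)) = 0"
    using sum0 by simp
  have xn: "x k n \<in> H 0" using x_in_H[OF n_mem] H_n by simp
  have "\<omega> n \<in> H 0" using \<omega> n_mem H_n by auto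
  then have Gadj_init: "(\<Sum>i=1..n-1. Gadj i (\<omega> i)) = - \<omega> n"
    using sum0 sum_atLeastAtMost_split_last[of n "\<lambda>i. Gadj i (\<omega> i)"] n2 Gadj_n
    by (simp add: eq_neg_iff_add_eq_0)
  have u_part: "(\<Sum>i=1..n-1. inner (\<omega> i) (u k i)) = (\<Sum>i=1..n. inner (x k i) (\<omega> i))"
  proof -
    have "(\<Sum>i=1..n-1. inner (\<omega> i) (u k i)) =
          (\<Sum>i=1..n-1. inner (\<omega> i) (x k i)) - (\<Sum>i=1..n-1. inner (Gadj i (\<omega> i)) (x k n))"
      using u_def inner_Gadj[OF _ _ xn] \<omega>
      by (auto simp add: inner_diff_right sum_subtractf intro!: sum.cong)
    also have "(\<Sum>i=1..n-1. inner (Gadj i (\<omega> i)) (x k n)) = - inner (\<omega> n) (x k n)"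
      using Gadj_init by (simp add: inner_sum_left[symmetric])
    finally show ?thesis
      using sum_atLeastAtMost_split_last[of n "\<lambda>i. inner (x k i) (\<omega> i)"] n2
      by (simp add: inner_commute)
  qed
  show ?thesis
    unfolding v_part u_part using G_part
    by (simp add: inner_diff_left inner_diff_right sum_subtractf sum.distrib inner_commute algebra_simps)
qed

definition phi_term :: "nat \<Rightarrow> nat \<Rightarrow> real" where
  "phi_term k i = inner (G i (z k) - x k i) (y k i - w k i) - coco_term k i"

lemma phi_eq_sum_phi_term: "phi k = (\<Sum>i=1..n. phi_term k i)"
  using phi_affine_identity[OF z_in_H _ Gadj_w_sum, where c = "coco_term k"] w_in_H phi_def
  unfolding phi_term_def coco_term_def by simp

definition extended_solution :: "'a \<Rightarrow> (nat \<Rightarrow> 'a) \<Rightarrow> bool" where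
  "extended_solution zs ws \<longleftrightarrow> zs \<in> H 0 \<and> (\<forall>i\<in>{1..n}. ws i \<in> H i) \<and>
     (\<Sum>i=1..n. Gadj i (ws i)) = 0 \<and>
     (\<forall>i\<in>{1..n}. \<exists>a\<in>A i (G i zs). ws i = a + B i (G i zs) + C i (G i zs) + D i (G i zs))"

lemma extended_solution_exists: "\<exists>zs ws. extended_solution zs ws"
proof -
  obtain zs ws where zs: "zs \<in> H 0"
    and ws: "\<forall>i\<in>{1..n}. ws i \<in> op_sum (A i) (B i) (C i) (D i) (G i zs)"
    and sum0: "(\<Sum>i=1..n. Gadj i (ws i)) = 0"
    using A6 by blast
  have T: "\<forall>i\<in>{1..n}. \<exists>a\<in>A i (G i zs). ws i = a + B i (G i zs) + C i (G i zs) + D i (G i zs)"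
    using ws unfolding op_sum_def by auto
  then have "ws i \<in> H i" if "i \<in> {1..n}" for i
    using op_sum_in_H[OF that _ G_in_H[OF that zs]] that by metis
  then show ?thesis unfolding extended_solution_def using zs sum0 T by blast
qed

text \<open>\<open>\<phi>\<^sub>k\<close> evaluated at \<open>(zs, ws)\<close>, in the symmetric form of the identity above.\<close>

definition phi_at :: "'a \<Rightarrow> (nat \<Rightarrow> 'a) \<Rightarrow> nat \<Rightarrow> real" where
  "phi_at zs ws k = (\<Sum>i=1..n. inner (G i zs - x k i) (y k i - ws i) - coco_term k i)"

lemma phi_sub_phi_at:
  assumes "extended_solution zs ws"
  shows "phi k - phi_at zs ws k = inner (z k - zs) (v k) + (\<Sum>i=1..n-1. inner (w k i - ws i) (u k i))"
proof -
  have "phi_at zs ws k = inner zs (v k) + (\<Sum>i=1..n-1. inner (ws i) (u k i))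
      - (\<Sum>i=1..n. inner (x k i) (y k i) + coco_term k i)"
    unfolding phi_at_def using phi_affine_identity[of zs ws k] assms
    unfolding extended_solution_def by simp
  then show ?thesis using phi_def unfolding coco_term_def
    by (simp add: inner_diff_left sum_subtractf)
qed

lemma phi_at_nonpos:
  assumes sol: "extended_solution zs ws"
  shows "phi_at zs ws k \<le> 0"
proof -
  have "0 \<le> inner (x k i - G i zs) (y k i - ws i) + coco_term k i" if i: "i \<in> {1..n}" for i
  proof -
    define p s \<xi> where "p = G i (z k)" and "s = G i zs" and "\<xi> = x k i"
    have zs: "zs \<in> H 0" using sol unfolding extended_solution_def by blast
    have pH: "p \<in> H i" and sH: "s \<in> H i" and \<xi>H: "\<xi> \<in> H i"
      using G_in_H[OF i z_in_H] G_in_H[OF i zs] x_in_H[OF i] unfolding p_def s_def \<xi>_def by auto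
    obtain a where a: "a \<in> A i \<xi>" "y k i = a + B i \<xi> + C i p + D i \<xi>"
      using y_eq[OF i] unfolding p_def \<xi>_def by blast
    obtain as where as: "as \<in> A i s" "ws i = as + B i s + C i s + D i s"
      using sol i unfolding extended_solution_def s_def by blast
    have "0 \<le> inner (\<xi> - s) (a - as)" using max_mono_op_monotone A2 i a(1) as(1) by blast
    moreover have "0 \<le> inner (\<xi> - s) (B i \<xi> - B i s)" "0 \<le> inner (\<xi> - s) (D i \<xi> - D i s)"
      using A3 A5 i \<xi>H sH unfolding mono_fun_def by blast+
    moreover have "0 \<le> inner (\<xi> - s) (C i p - C i s) + inv_beta i / 4 * (norm (\<xi> - p))\<^sup>2"
      using cocoercive_inner_shift_ge[OF _ _ pH sH] A4 i unfolding inv_beta_def by blast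
    moreover have "coco_term k i = inv_beta i / 4 * (norm (\<xi> - p))\<^sup>2"
      unfolding coco_term_def \<xi>_def p_def using quarter_inv_beta[OF i] by simp
    moreover have "inner (x k i - G i zs) (y k i - ws i) = inner (\<xi> - s) (a - as)
        + inner (\<xi> - s) (B i \<xi> - B i s) + inner (\<xi> - s) (D i \<xi> - D i s) + inner (\<xi> - s) (C i p - C i s)"
      unfolding a(2) as(2) \<xi>_def s_def by (simp add: inner_add_right inner_diff_right algebra_simps)
    ultimately show ?thesis by linarith
  qed
  then have "(\<Sum>i=1..n. inner (G i zs - x k i) (y k i - ws i) - coco_term k i) \<le> (\<Sum>i=1..n. 0::real)"
    by (intro sum_mono) (smt (verit) inner_minus_left minus_diff_eq)
  then show ?thesis unfolding phi_at_def by simp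
qed

definition sq_dist :: "'a \<Rightarrow> (nat \<Rightarrow> 'a) \<Rightarrow> nat \<Rightarrow> real" where
  "sq_dist zs ws k = gamma * (norm (z k - zs))\<^sup>2 + (\<Sum>i=1..n-1. (norm (w k i - ws i))\<^sup>2)"

lemma sq_dist_nonneg: "0 \<le> sq_dist zs ws k"
  unfolding sq_dist_def using params by (auto intro!: add_nonneg_nonneg sum_nonneg)

lemma pik_nonneg: "0 \<le> pik k"
  using pi_def params by (auto intro!: add_nonneg_nonneg sum_nonneg)

text \<open>If \<open>\<pi>\<^sub>k = 0\<close> then \<open>\<phi>\<^sub>k = \<phi>\<^sub>k(p\<^sup>*) \<le> 0\<close> for a solution \<open>p\<^sup>*\<close>, so the step size \<open>\<alpha>\<^sub>k\<close> is
well defined.\<close>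

lemma pik_pos:
  assumes "0 < phi k"
  shows "0 < pik k"
proof (rule ccontr)
  assume "\<not> 0 < pik k"
  then have "(1 / gamma) * (norm (v k))\<^sup>2 + (\<Sum>i=1..n-1. (norm (u k i))\<^sup>2) = 0"
    using pik_nonneg[of k] pi_def by simp
  moreover have "0 \<le> (1 / gamma) * (norm (v k))\<^sup>2" "0 \<le> (\<Sum>i=1..n-1. (norm (u k i))\<^sup>2)"
    using params by (simp_all add: sum_nonneg)
  ultimately have "v k = 0" "\<forall>i\<in>{1..n-1}. u k i = 0"
    using params by (auto simp: sum_nonneg_eq_0_iff add_nonneg_eq_0_iff)
  moreover obtain zs ws where "extended_solution zs ws" using extended_solution_exists by blast
  ultimately have "phi k = phi_at zs ws k" "phi_at zs ws k \<le> 0"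
    using phi_sub_phi_at[of zs ws k] phi_at_nonpos by auto
  then show False using assms by simp
qed

definition descent :: "nat \<Rightarrow> real" where
  "descent k = (if 0 < phi k then tau_lo * (2 - tau_up) * (phi k)\<^sup>2 / pik k else 0)"

lemma descent_nonneg: "0 \<le> descent k"
  unfolding descent_def using params pik_nonneg[of k] by auto

lemma sq_dist_Suc_eq:
  assumes "0 < phi k"
  shows "sq_dist zs ws (Suc k) = sq_dist zs ws k
    - 2 * alpha k * (inner (z k - zs) (v k) + (\<Sum>i=1..n-1. inner (w k i - ws i) (u k i)))
    + (alpha k)\<^sup>2 * pik k"
proof -
  define a where "a = alpha k"
  have upd: "z (Suc k) = z k - (a / gamma) *\<^sub>R v k" "\<forall>i\<in>{1..n-1}. w (Suc k) i = w k i - a *\<^sub>R u k i"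
    using update assms unfolding a_def by blast+
  have z_step: "(norm (z (Suc k) - zs))\<^sup>2
      = (norm (z k - zs))\<^sup>2 - 2 * (a / gamma) * inner (z k - zs) (v k) + (a / gamma)\<^sup>2 * (norm (v k))\<^sup>2"
  proof -
    have "z (Suc k) - zs = (z k - zs) - (a / gamma) *\<^sub>R v k" using upd(1) by simp
    then show ?thesis using power2_norm_diff_scaleR[of "z k - zs" "a / gamma" "v k"] by (simp only:)
  qed
  have "(\<Sum>i=1..n-1. (norm (w (Suc k) i - ws i))\<^sup>2) = (\<Sum>i=1..n-1. (norm (w k i - ws i))\<^sup>2
      - 2 * a * inner (w k i - ws i) (u k i) + a\<^sup>2 * (norm (u k i))\<^sup>2)"
  proof (rule sum.cong)
    fix i assume "i \<in> {1..n-1}"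
    then have "w (Suc k) i - ws i = (w k i - ws i) - a *\<^sub>R u k i" using upd(2) by simp
    then show "(norm (w (Suc k) i - ws i))\<^sup>2
        = (norm (w k i - ws i))\<^sup>2 - 2 * a * inner (w k i - ws i) (u k i) + a\<^sup>2 * (norm (u k i))\<^sup>2"
      using power2_norm_diff_scaleR[of "w k i - ws i" a "u k i"] by (simp only:)
  qed simp
  then have w_step: "(\<Sum>i=1..n-1. (norm (w (Suc k) i - ws i))\<^sup>2) = (\<Sum>i=1..n-1. (norm (w k i - ws i))\<^sup>2)
      - 2 * a * (\<Sum>i=1..n-1. inner (w k i - ws i) (u k i)) + a\<^sup>2 * (\<Sum>i=1..n-1. (norm (u k i))\<^sup>2)"
    by (simp add: sum.distrib sum_subtractf sum_distrib_left)
  show ?thesis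
    unfolding sq_dist_def z_step w_step pi_def[rule_format] a_def[symmetric] using params
    by (simp add: field_simps power2_eq_square)
qed

lemma sq_dist_Suc_le:
  assumes sol: "extended_solution zs ws"
  shows "sq_dist zs ws (Suc k) \<le> sq_dist zs ws k - descent k"
proof (cases "0 < phi k")
  case False
  then show ?thesis using update unfolding sq_dist_def descent_def by simp
next
  case True
  have pik: "0 < pik k" using pik_pos[OF True] .
  have tau: "tau_lo \<le> tau k" "tau k \<le> tau_up" and alpha: "alpha k = tau k * phi k / pik k"
    using update True by blast+
  define gap where "gap = inner (z k - zs) (v k) + (\<Sum>i=1..n-1. inner (w k i - ws i) (u k i))"
  have "phi k \<le> gap"
    using phi_sub_phi_at[OF sol, of k] phi_at_nonpos[OF sol, of k] unfolding gap_def by linarith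
  moreover have "0 \<le> alpha k" using tau alpha params True pik by simp
  ultimately have "2 * alpha k * phi k \<le> 2 * alpha k * gap" by (simp add: mult_left_mono)
  then have "sq_dist zs ws (Suc k) \<le> sq_dist zs ws k - 2 * alpha k * phi k + (alpha k)\<^sup>2 * pik k"
    using sq_dist_Suc_eq[OF True, of zs ws] unfolding gap_def by linarith
  also have "\<dots> = sq_dist zs ws k - tau k * (2 - tau k) * (phi k)\<^sup>2 / pik k"
    unfolding alpha using pik by (simp add: field_simps power2_eq_square)
  also have "\<dots> \<le> sq_dist zs ws k - descent k"
  proof -
    have "tau_lo * (2 - tau_up) * (phi k)\<^sup>2 / pik k \<le> tau k * (2 - tau k) * (phi k)\<^sup>2 / pik k"
      using tau params pik by (intro divide_right_mono mult_right_mono mult_mono) auto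
    then show ?thesis using True unfolding descent_def by simp
  qed
  finally show ?thesis .
qed

subsection \<open>Step sizes\<close>

lemma rho_bounds_plain:
  "\<exists>rl ru. \<forall>i\<in>{1..n}-ID. 0 < rl i \<and> rl i \<le> ru i \<and> ru i * (inv_beta i / 4 + ell i) < 1 \<and>
     (\<forall>k. w k i \<notin> op_sum (A i) (B i) (C i) (D i) (G i (z k)) \<longrightarrow> rl i \<le> rho k i \<and> rho k i \<le> ru i)"
proof -
  have "\<exists>rl ru. 0 < rl \<and> rl \<le> ru \<and> ru * (inv_beta i / 4 + ell i) < 1 \<and>
     (\<forall>k. w k i \<notin> op_sum (A i) (B i) (C i) (D i) (G i (z k)) \<longrightarrow> rl \<le> rho k i \<and> rho k i \<le> ru)"
    if i: "i \<in> {1..n}-ID" for i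
  proof -
    obtain rl ru where r: "0 < rl" "rl \<le> ru" "ereal ru < 1 / (1 / (4 * beta i) + ereal (ell i))"
      "\<forall>k. w k i \<notin> op_sum (A i) (B i) (C i) (D i) (G i (z k)) \<longrightarrow> rl \<le> rho k i \<and> rho k i \<le> ru"
      using A8 i by blast
    moreover have "ru * (inv_beta i / 4 + ell i) < 1"
      using ereal_less_inverse_imp_mult_less_one[OF _ _ r(3)] A4 A3 i unfolding inv_beta_def by auto
    ultimately show ?thesis by blast
  qed
  then show ?thesis by metis
qed

lemma step_cases [consumes 1]:
  assumes "i \<in> {1..n}"
  obtains (solved) "x k i = G i (z k)" "rho k i = rho_hat"
  | (linearized) "i \<in> ID"
      "theta_lo \<le> 4 * (ell i)\<^sup>2 * (rho k i)\<^sup>2 + (inv_beta i + delta_hat) * rho k i + (m i * rho k i * resid k i)\<^sup>2"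
      "4 * (ell i)\<^sup>2 * (rho k i)\<^sup>2 + (inv_beta i + delta_hat) * rho k i + (m i * rho k i * resid k i)\<^sup>2 \<le> theta_up"
  | (plain) "i \<in> {1..n} - ID" "w k i \<notin> op_sum (A i) (B i) (C i) (D i) (G i (z k))"
proof (cases "w k i \<in> op_sum (A i) (B i) (C i) (D i) (G i (z k))")
  case True
  then show ?thesis using case_i assms solved by blast
next
  case False
  then show ?thesis
    using case_ii linearized plain assms unfolding inv_beta_def resid_def
    by (cases "i \<in> ID") (auto simp: norm_minus_commute)
qed

lemma rho_bounded: "\<exists>R>0. \<forall>k. \<forall>i\<in>{1..n}. rho k i \<le> R"
proof -
  obtain rl ru where r: "\<forall>i\<in>{1..n}-ID. 0 < rl i \<and> rl i \<le> ru i \<and>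
      (\<forall>k. w k i \<notin> op_sum (A i) (B i) (C i) (D i) (G i (z k)) \<longrightarrow> rl i \<le> rho k i \<and> rho k i \<le> ru i)"
    using rho_bounds_plain by blast
  define R where "R = rho_hat + theta_up / delta_hat + (\<Sum>i\<in>{1..n}-ID. ru i)"
  have ru_nonneg: "\<forall>i\<in>{1..n}-ID. 0 \<le> ru i" using r by (meson less_imp_le order_trans)
  then have ru_sum: "0 \<le> (\<Sum>i\<in>{1..n}-ID. ru i)" by (intro sum_nonneg) blast
  have th: "0 \<le> theta_up / delta_hat" using params by simp
  have "rho k i \<le> R" if i: "i \<in> {1..n}" for k i
  using i proof (cases rule: step_cases[where k = k])
    case solved
    then show ?thesis unfolding R_def using ru_sum th by simp
  next
    case linearized
    have "0 \<le> 4 * (ell i)\<^sup>2 * (rho k i)\<^sup>2" "0 \<le> (m i * rho k i * resid k i)\<^sup>2"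
      "0 \<le> inv_beta i * rho k i"
      using inv_beta_nonneg[OF i] rho_pos[OF i, of k] by simp_all
    moreover have "(inv_beta i + delta_hat) * rho k i = inv_beta i * rho k i + delta_hat * rho k i"
      by (simp add: algebra_simps)
    ultimately have "delta_hat * rho k i \<le> theta_up" using linearized(3) by linarith
    then have "rho k i \<le> theta_up / delta_hat" using params by (simp add: field_simps)
    then show ?thesis unfolding R_def using params ru_sum by linarith
  next
    case plain
    then have "rho k i \<le> ru i" using r by blast
    also have "ru i \<le> (\<Sum>i\<in>{1..n}-ID. ru i)"
      using plain(1) ru_nonneg by (intro member_le_sum) auto
    finally show ?thesis unfolding R_def using params th by linarith
  qed
  moreover have "R > 0" unfolding R_def using params ru_sum th by linarith
  ultimately show ?thesis by blast
qed

lemma phi_term_ge: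
  assumes i: "i \<in> {1..n}"
  shows "(resid k i)\<^sup>2 / rho k i * (1 - ell i * rho k i - m i * rho k i * resid k i / 2 - inv_beta i * rho k i / 4)
     \<le> phi_term k i"
proof -
  define p e d \<rho> where "p = G i (z k)" and "e = G i (z k) - x k i" and "d = resid k i" and "\<rho> = rho k i"
  have \<rho>: "0 < \<rho>" using rho_pos[OF i] \<rho>_def by simp
  have de: "d = norm e" unfolding d_def e_def resid_def ..
  obtain r where r: "y k i - w k i = (1 / \<rho>) *\<^sub>R e + (B i (x k i) - B i p) + r" "norm r \<le> m i / 2 * d\<^sup>2"
    using y_sub_w_eq[OF i] unfolding p_def e_def d_def \<rho>_def resid_def by blast
  have "norm (B i (x k i) - B i p) \<le> ell i * norm (x k i - p)"
    using A3 i x_in_H[OF i] G_in_H[OF i z_in_H] unfolding p_def by blast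
  then have "\<bar>inner e (B i (x k i) - B i p)\<bar> \<le> d * (ell i * d)"
    using Cauchy_Schwarz_ineq2[of e] de unfolding e_def p_def
    by (smt (verit, best) mult_left_mono norm_ge_zero norm_minus_commute)
  moreover have "\<bar>inner e r\<bar> \<le> d * (m i / 2 * d\<^sup>2)"
    using Cauchy_Schwarz_ineq2[of e r] r(2) de by (smt (verit, best) mult_left_mono norm_ge_zero)
  moreover have "phi_term k i = d\<^sup>2 / \<rho> + inner e (B i (x k i) - B i p) + inner e r - inv_beta i / 4 * d\<^sup>2"
    unfolding phi_term_def r(1) e_def[symmetric] coco_term_eq[OF i] d_def[symmetric] using de \<rho>
    by (simp add: inner_add_right power2_norm_eq_inner)
  moreover have "d\<^sup>2 / \<rho> * (1 - ell i * \<rho> - m i * \<rho> * d / 2 - inv_beta i * \<rho> / 4)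
     = d\<^sup>2 / \<rho> - d * (ell i * d) - d * (m i / 2 * d\<^sup>2) - inv_beta i / 4 * d\<^sup>2"
    using \<rho> by (simp add: field_simps power2_eq_square)
  ultimately show ?thesis unfolding d_def \<rho>_def by (simp add: abs_le_iff) linarith
qed

lemma phi_term_coefficient_ge:
  assumes i: "i \<in> {1..n}"
  shows "\<exists>\<kappa>>0. \<forall>k. resid k i \<noteq> 0 \<longrightarrow>
    \<kappa> \<le> 1 - ell i * rho k i - m i * rho k i * resid k i / 2 - inv_beta i * rho k i / 4"
proof -
  obtain rl ru where r: "\<forall>i\<in>{1..n}-ID. ru i * (inv_beta i / 4 + ell i) < 1 \<and>
      (\<forall>k. w k i \<notin> op_sum (A i) (B i) (C i) (D i) (G i (z k)) \<longrightarrow> rl i \<le> rho k i \<and> rho k i \<le> ru i)"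
    using rho_bounds_plain by blast
  define \<kappa> where "\<kappa> = (if i \<in> ID then 1 - sqrt (theta_up / 2) else 1 - ru i * (inv_beta i / 4 + ell i))"
  have ell0: "0 \<le> ell i" and m0: "0 \<le> m i" and b0: "0 \<le> inv_beta i"
    using A3 A5 i inv_beta_nonneg[OF i] by auto
  have "\<kappa> > 0" using r i params unfolding \<kappa>_def by auto
  moreover have "\<kappa> \<le> 1 - ell i * rho k i - m i * rho k i * resid k i / 2 - inv_beta i * rho k i / 4"
    if "resid k i \<noteq> 0" for k
    using i
  proof (cases rule: step_cases[where k = k])
    case solved
    then show ?thesis using that unfolding resid_def by simp
  next
    case linearized
    have \<rho>: "0 < rho k i" using rho_pos[OF i] .
    have "0 \<le> delta_hat * rho k i" using params \<rho> by simp
    then have "4 * (ell i * rho k i)\<^sup>2 + (m i * rho k i * resid k i)\<^sup>2 + inv_beta i * rho k i \<le> theta_up"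
      using linearized(3) by (simp add: algebra_simps power_mult_distrib)
    then have "1 - sqrt (theta_up / 2)
        \<le> 1 - ell i * rho k i - m i * rho k i * resid k i / 2 - inv_beta i * rho k i / 4"
      using one_sub_sqrt_half_le[of "ell i * rho k i" "m i * rho k i * resid k i" "inv_beta i * rho k i"]
        ell0 m0 b0 \<rho> params unfolding resid_def by auto
    then show ?thesis using linearized \<kappa>_def by simp
  next
    case plain
    then have "m i = 0" "rho k i \<le> ru i" using A7 r by blast+
    moreover have "rho k i * (inv_beta i / 4 + ell i) \<le> ru i * (inv_beta i / 4 + ell i)"
      using \<open>rho k i \<le> ru i\<close> b0 ell0 by (intro mult_right_mono) auto
    ultimately show ?thesis using plain \<kappa>_def by (simp add: algebra_simps)
  qed
  ultimately show ?thesis by blast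
qed

lemma phi_term_ge_index:
  assumes i: "i \<in> {1..n}"
  shows "\<exists>\<kappa>>0. \<forall>k. \<kappa> * (resid k i)\<^sup>2 / rho k i \<le> phi_term k i"
proof -
  obtain \<kappa> where \<kappa>: "\<kappa> > 0" "\<forall>k. resid k i \<noteq> 0 \<longrightarrow>
      \<kappa> \<le> 1 - ell i * rho k i - m i * rho k i * resid k i / 2 - inv_beta i * rho k i / 4"
    using phi_term_coefficient_ge[OF i] by blast
  have "\<kappa> * (resid k i)\<^sup>2 / rho k i \<le> phi_term k i" for k
  proof (cases "resid k i = 0")
    case False
    with \<kappa>(2) have "\<kappa> \<le> 1 - ell i * rho k i - m i * rho k i * resid k i / 2 - inv_beta i * rho k i / 4"
      by blast
    from mult_left_mono[OF this, of "(resid k i)\<^sup>2 / rho k i"] rho_pos[OF i, of k]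
    show ?thesis using phi_term_ge[OF i, of k] by (simp add: mult.commute)
  qed (use phi_term_ge[OF i, of k] in simp)
  then show ?thesis using \<kappa>(1) by blast
qed

lemma phi_term_ge_uniform: "\<exists>\<kappa>>0. \<forall>i\<in>{1..n}. \<forall>k. \<kappa> * (resid k i)\<^sup>2 / rho k i \<le> phi_term k i"
proof (rule finite_family_small_constant)
  fix i assume i: "i \<in> {1..n}"
  then obtain \<kappa> where \<kappa>: "\<kappa> > 0" "\<forall>k. \<kappa> * (resid k i)\<^sup>2 / rho k i \<le> phi_term k i"
    using phi_term_ge_index by blast
  have "\<kappa>' * (resid k i)\<^sup>2 / rho k i \<le> phi_term k i" if "\<kappa>' \<le> \<kappa>" for \<kappa>' k
    using \<kappa>(2) divide_right_mono[OF mult_right_mono[OF that], of "(resid k i)\<^sup>2" "rho k i"] rho_pos[OF i]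
    by (smt (verit) zero_le_power2)
  then show "\<exists>\<kappa>>0. \<forall>\<kappa>'. 0 < \<kappa>' \<longrightarrow> \<kappa>' \<le> \<kappa> \<longrightarrow> (\<forall>k. \<kappa>' * (resid k i)\<^sup>2 / rho k i \<le> phi_term k i)"
    using \<kappa>(1) by blast
qed simp

lemma phi_term_nonneg: "i \<in> {1..n} \<Longrightarrow> 0 \<le> phi_term k i"
  using phi_term_ge_uniform rho_pos by (smt (verit) divide_nonneg_pos mult_nonneg_nonneg zero_le_power2)

lemma phi_nonneg: "0 \<le> phi k"
  unfolding phi_eq_sum_phi_term using phi_term_nonneg by (intro sum_nonneg) auto

lemma phi_ge_resid: "\<exists>\<kappa>>0. \<forall>i\<in>{1..n}. \<forall>k. \<kappa> * (resid k i)\<^sup>2 / rho k i \<le> phi k"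
proof -
  have "phi_term k i \<le> phi k" if "i \<in> {1..n}" for i k
    unfolding phi_eq_sum_phi_term using phi_term_nonneg that by (intro member_le_sum) auto
  then show ?thesis using phi_term_ge_uniform by (meson order_trans)
qed

lemma rho_ge_index:
  assumes K: "0 \<le> K" and i: "i \<in> {1..n}"
  shows "\<exists>r>0. \<forall>k. resid k i \<le> K \<longrightarrow> r \<le> rho k i"
proof -
  obtain rl where rl: "\<forall>i\<in>{1..n}-ID. 0 < rl i \<and>
      (\<forall>k. w k i \<notin> op_sum (A i) (B i) (C i) (D i) (G i (z k)) \<longrightarrow> rl i \<le> rho k i)"
    using rho_bounds_plain by blast
  obtain R where R: "R > 0" "\<forall>k. \<forall>i\<in>{1..n}. rho k i \<le> R" using rho_bounded by blast
  \<comment> \<open>In the linearized case the lower bound \<open>\<theta>_lo\<close> of the step-size test is at most \<open>Q \<rho>\<close>.\<close>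
  define Q where "Q = 4 * (ell i)\<^sup>2 * R + inv_beta i + delta_hat + (m i)\<^sup>2 * K\<^sup>2 * R"
  have Q: "Q > 0" unfolding Q_def using params R inv_beta_nonneg[OF i] by (simp add: add_nonneg_pos add_pos_nonneg)
  define r where "r = min rho_hat (if i \<in> ID then theta_lo / Q else rl i)"
  have "r > 0" unfolding r_def using params Q rl i by auto
  moreover have "r \<le> rho k i" if dK: "resid k i \<le> K" for k
    using i
  proof (cases rule: step_cases[where k = k])
    case solved
    then show ?thesis unfolding r_def by simp
  next
    case linearized
    have \<rho>: "0 < rho k i" using rho_pos[OF i] .
    have "(4 * (ell i)\<^sup>2 * rho k i) * rho k i \<le> (4 * (ell i)\<^sup>2 * R) * rho k i"
      using R i \<rho> by (intro mult_right_mono mult_left_mono) auto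
    then have "4 * (ell i)\<^sup>2 * (rho k i)\<^sup>2 \<le> (4 * (ell i)\<^sup>2 * R) * rho k i"
      by (simp add: power2_eq_square mult.assoc)
    moreover have "(m i * rho k i * resid k i)\<^sup>2 \<le> ((m i)\<^sup>2 * K\<^sup>2 * R) * rho k i"
    proof -
      have "(resid k i)\<^sup>2 * rho k i \<le> K\<^sup>2 * R"
        using dK R i \<rho> unfolding resid_def by (intro mult_mono power_mono) auto
      then have "(m i)\<^sup>2 * ((resid k i)\<^sup>2 * rho k i) * rho k i \<le> (m i)\<^sup>2 * (K\<^sup>2 * R) * rho k i"
        using \<rho> by (intro mult_right_mono mult_left_mono) auto
      then show ?thesis by (simp add: power2_eq_square ac_simps)
    qed
    ultimately have "theta_lo \<le> Q * rho k i"
      using linearized(2) unfolding Q_def by (simp add: algebra_simps)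
    then have "theta_lo / Q \<le> rho k i" using Q by (simp add: field_simps)
    then show ?thesis unfolding r_def using linearized by simp
  next
    case plain
    then show ?thesis using rl unfolding r_def by (simp add: min_le_iff_disj)
  qed
  ultimately show ?thesis by blast
qed

lemma rho_lower_bound:
  assumes "0 \<le> K"
  shows "\<exists>r>0. \<forall>i\<in>{1..n}. \<forall>k. resid k i \<le> K \<longrightarrow> r \<le> rho k i"
proof (rule finite_family_small_constant)
  fix i assume "i \<in> {1..n}"
  then obtain r where "r > 0" "\<forall>k. resid k i \<le> K \<longrightarrow> r \<le> rho k i"
    using rho_ge_index[OF assms] by blast
  then show "\<exists>r>0. \<forall>r'. 0 < r' \<longrightarrow> r' \<le> r \<longrightarrow> (\<forall>k. resid k i \<le> K \<longrightarrow> r' \<le> rho k i)"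
    by force
qed simp

text \<open>The step-size test \<open>(m\<^sub>i \<rho> d)\<^sup>2 \<le> \<theta> < 2\<close> keeps the Taylor remainder below \<open>d / \<rho>\<close>.\<close>

lemma taylor_remainder_le:
  assumes i: "i \<in> {1..n}"
  shows "m i / 2 * (resid k i)\<^sup>2 \<le> resid k i / rho k i"
  using i
proof (cases rule: step_cases[where k = k])
  case solved
  then show ?thesis unfolding resid_def by simp
next
  case linearized
  have \<rho>: "0 < rho k i" using rho_pos[OF i] .
  have "0 \<le> 4 * (ell i)\<^sup>2 * (rho k i)\<^sup>2" "0 \<le> (inv_beta i + delta_hat) * rho k i"
    using inv_beta_nonneg[OF i] params \<rho> by simp_all
  then have "(m i * rho k i * resid k i)\<^sup>2 \<le> theta_up" using linearized(3) by linarith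
  then have "(m i * rho k i * resid k i)\<^sup>2 \<le> 2\<^sup>2" using params by simp
  then have "m i * rho k i * resid k i \<le> 2" by (rule power2_le_imp_le) simp
  then show ?thesis
    using \<rho> mult_right_mono[of "m i * rho k i * resid k i" 2 "resid k i / rho k i"]
    unfolding resid_def by (simp add: power2_eq_square field_simps)
next
  case plain
  then show ?thesis using A7 rho_pos[OF i, of k] unfolding resid_def by simp
qed

lemma y_sub_w_le_index:
  assumes i: "i \<in> {1..n}"
  shows "\<exists>K. \<forall>k. norm (y k i - w k i) \<le> K * (resid k i / rho k i)"
proof -
  obtain R where R: "R > 0" "\<forall>k. \<forall>i\<in>{1..n}. rho k i \<le> R" using rho_bounded by blast
  have ell0: "0 \<le> ell i" using A3 i by blast
  have "norm (y k i - w k i) \<le> (2 + ell i * R) * (resid k i / rho k i)" for k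
  proof -
    have \<rho>: "0 < rho k i" using rho_pos[OF i] .
    obtain r where r: "y k i - w k i = (1 / rho k i) *\<^sub>R (G i (z k) - x k i) + (B i (x k i) - B i (G i (z k))) + r"
        "norm r \<le> m i / 2 * (resid k i)\<^sup>2"
      using y_sub_w_eq[OF i] unfolding resid_def by blast
    have "norm (B i (x k i) - B i (G i (z k))) \<le> ell i * resid k i"
      using A3 i x_in_H[OF i] G_in_H[OF i z_in_H] unfolding resid_def by (metis norm_minus_commute)
    also have "\<dots> \<le> ell i * R * (resid k i / rho k i)"
      using R i \<rho> ell0 mult_right_mono[of "rho k i" R "ell i * (resid k i / rho k i)"]
      unfolding resid_def by (simp add: ac_simps)
    finally have "norm (B i (x k i) - B i (G i (z k))) \<le> ell i * R * (resid k i / rho k i)" .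
    moreover have "norm r \<le> resid k i / rho k i" using r(2) taylor_remainder_le[OF i, of k] by linarith
    moreover have "norm (y k i - w k i)
        \<le> resid k i / rho k i + norm (B i (x k i) - B i (G i (z k))) + norm r"
    proof -
      define a b where "a = (1 / rho k i) *\<^sub>R (G i (z k) - x k i)" and "b = B i (x k i) - B i (G i (z k))"
      have "norm a = resid k i / rho k i" using \<rho> unfolding a_def resid_def by simp
      moreover have "norm (a + b + r) \<le> norm a + norm b + norm r"
        using norm_triangle_ineq[of "a + b" r] norm_triangle_ineq[of a b] by linarith
      ultimately show ?thesis unfolding r(1) a_def[symmetric] b_def[symmetric] by linarith
    qed
    ultimately show ?thesis by (simp add: algebra_simps add_divide_distrib)
  qed
  then show ?thesis by blast
qed

lemma y_sub_w_le: "\<exists>K>0. \<forall>i\<in>{1..n}. \<forall>k. norm (y k i - w k i) \<le> K * (resid k i / rho k i)"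
proof (rule finite_family_large_constant)
  fix i assume i: "i \<in> {1..n}"
  then obtain K where K: "\<forall>k. norm (y k i - w k i) \<le> K * (resid k i / rho k i)"
    using y_sub_w_le_index by blast
  have "norm (y k i - w k i) \<le> K' * (resid k i / rho k i)" if "K \<le> K'" for K' k
    using K mult_right_mono[OF that, of "resid k i / rho k i"] rho_pos[OF i, of k]
    unfolding resid_def by (smt (verit) divide_nonneg_pos norm_ge_zero)
  then show "\<exists>K. \<forall>K'\<ge>K. \<forall>k. norm (y k i - w k i) \<le> K' * (resid k i / rho k i)" by blast
qed simp

subsection \<open>Boundedness and convergence\<close>

lemma sq_dist_le_initial:
  assumes "extended_solution zs ws"
  shows "sq_dist zs ws k \<le> sq_dist zs ws 0"
proof (induction k)
  case (Suc k)
  then show ?case using sq_dist_Suc_le[OF assms, of k] descent_nonneg[of k] by linarith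
qed simp

lemma iterates_bounded:
  assumes sol: "extended_solution zs ws"
  shows "\<exists>R\<ge>0. \<forall>k. norm (z k - zs) \<le> R \<and> (\<forall>i\<in>{1..n-1}. norm (w k i - ws i) \<le> R)"
proof -
  define S where "S = sq_dist zs ws 0"
  have S: "0 \<le> S" unfolding S_def by (rule sq_dist_nonneg)
  have "norm (z k - zs) \<le> sqrt (S / gamma)" for k
  proof -
    have "gamma * (norm (z k - zs))\<^sup>2 \<le> S"
      using sq_dist_le_initial[OF sol, of k] unfolding sq_dist_def S_def
      by (smt (verit) sum_nonneg zero_le_power2)
    then show ?thesis using params by (simp add: real_le_rsqrt field_simps mult.commute)
  qed
  moreover have "norm (w k i - ws i) \<le> sqrt S" if "i \<in> {1..n-1}" for k i
  proof -
    have "(norm (w k i - ws i))\<^sup>2 \<le> (\<Sum>i=1..n-1. (norm (w k i - ws i))\<^sup>2)"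
      using that by (intro member_le_sum) auto
    also have "\<dots> \<le> S"
      using sq_dist_le_initial[OF sol, of k] params unfolding sq_dist_def S_def
      by (smt (verit) mult_nonneg_nonneg zero_le_power2)
    finally show ?thesis by (simp add: real_le_rsqrt)
  qed
  ultimately show ?thesis
    using S params by (intro exI[of _ "sqrt (S / gamma) + sqrt S"]) (auto intro: add_increasing add_increasing2)
qed

lemma v_eq_sum_Gadj: "v k = (\<Sum>i=1..n. Gadj i (y k i - w k i))"
  using v_def Gadj_w_sum[of k] Gadj_diff[OF _ y_in_H w_in_H] by (simp add: sum_subtractf)

text \<open>Since \<open>G\<^sub>n = I\<close>, \<open>u\<^sub>i = -(G\<^sub>iz - x\<^sub>i) + G\<^sub>i(G\<^sub>nz - x\<^sub>n)\<close>.\<close>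

lemma u_norm_le:
  assumes i: "i \<in> {1..n-1}" and KG: "\<forall>p. norm (G i p) \<le> KG * norm p"
  shows "norm (u k i) \<le> resid k i + KG * resid k n"
proof -
  have "bounded_linear (G i)" using A1 i by auto
  then have Gx: "G i (x k n) = G i (z k) - G i (z k - x k n)"
    by (simp add: linear_diff bounded_linear.linear)
  have "u k i = x k i - G i (x k n)" using u_def i by blast
  then have "u k i = - (G i (z k) - x k i) + G i (z k - x k n)"
    unfolding Gx by (simp add: algebra_simps)
  then have "norm (u k i) \<le> norm (G i (z k) - x k i) + norm (G i (z k - x k n))"
    by (metis norm_minus_cancel norm_triangle_ineq)
  then show ?thesis
    using KG[rule_format, of "z k - x k n"] unfolding resid_def G_n[OF z_in_H] by linarith
qed

lemma v_u_le: "\<exists>K>0. \<forall>k M. (\<forall>i\<in>{1..n}. resid k i / rho k i \<le> M) \<longrightarrow>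
   norm (v k) \<le> K * M \<and> (\<forall>i\<in>{1..n-1}. norm (u k i) \<le> K * M)"
proof -
  obtain Ka where Ka: "Ka > 0" "\<forall>i\<in>{1..n}. \<forall>q\<in>H i. norm (Gadj i q) \<le> Ka * norm q"
    using Gadj_norm_le by blast
  obtain KG where KG: "KG > 0" "\<forall>i\<in>{1..n}. \<forall>p. norm (G i p) \<le> KG * norm p"
    using G_norm_le by blast
  obtain Ky where Ky: "Ky > 0" "\<forall>i\<in>{1..n}. \<forall>k. norm (y k i - w k i) \<le> Ky * (resid k i / rho k i)"
    using y_sub_w_le by blast
  obtain R where R: "R > 0" "\<forall>k. \<forall>i\<in>{1..n}. rho k i \<le> R" using rho_bounded by blast
  define K where "K = real n * Ka * Ky + (1 + KG) * R"
  have "norm (v k) \<le> K * M \<and> (\<forall>i\<in>{1..n-1}. norm (u k i) \<le> K * M)"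
    if M: "\<forall>i\<in>{1..n}. resid k i / rho k i \<le> M" for k M
  proof -
    have M0: "0 \<le> M" using M n_mem rho_pos[OF n_mem, of k] unfolding resid_def
      by (meson divide_nonneg_pos norm_ge_zero order_trans)
    have resid_le: "resid k i \<le> R * M" if i: "i \<in> {1..n}" for i
    proof -
      have "resid k i = rho k i * (resid k i / rho k i)" using rho_pos[OF i, of k] by simp
      also have "\<dots> \<le> R * M" using M i R rho_pos[OF i, of k] M0 unfolding resid_def by (intro mult_mono) auto
      finally show ?thesis .
    qed
    have "norm (v k) \<le> (\<Sum>i=1..n. norm (Gadj i (y k i - w k i)))"
      unfolding v_eq_sum_Gadj by (rule norm_sum)
    also have "\<dots> \<le> (\<Sum>i=1..n. Ka * (Ky * M))"
    proof (rule sum_mono)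
      fix i assume i: "i \<in> {1..n}"
      have "y k i - w k i \<in> H i" using y_in_H[OF i] w_in_H[OF i] subspace_H[of i] i by (simp add: subspace_diff)
      then have "norm (Gadj i (y k i - w k i)) \<le> Ka * norm (y k i - w k i)" using Ka i by blast
      also have "\<dots> \<le> Ka * (Ky * M)"
      proof -
        have "norm (y k i - w k i) \<le> Ky * (resid k i / rho k i)" using Ky i by blast
        also have "\<dots> \<le> Ky * M" using M i Ky by (intro mult_left_mono) auto
        finally show ?thesis using Ka by (intro mult_left_mono) auto
      qed
      finally show "norm (Gadj i (y k i - w k i)) \<le> Ka * (Ky * M)" .
    qed
    also have "\<dots> = real n * Ka * Ky * M" by simp
    also have "\<dots> \<le> K * M" unfolding K_def using M0 KG R by (intro mult_right_mono) auto
    finally have "norm (v k) \<le> K * M" .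
    moreover have "norm (u k i) \<le> K * M" if i: "i \<in> {1..n-1}" for i
    proof -
      have i': "i \<in> {1..n}" using i by auto
      have "norm (u k i) \<le> resid k i + KG * resid k n" using u_norm_le[OF i] KG i' by blast
      also have "\<dots> \<le> R * M + KG * (R * M)"
        using resid_le[OF i'] resid_le[OF n_mem] KG by (intro add_mono mult_left_mono) auto
      also have "\<dots> = (1 + KG) * R * M" by (simp add: algebra_simps)
      also have "\<dots> \<le> K * M" unfolding K_def using M0 Ka Ky by (intro mult_right_mono) auto
      finally show ?thesis .
    qed
    ultimately show ?thesis by blast
  qed
  moreover have "K > 0" unfolding K_def using Ka Ky KG R n2 by (simp add: add_pos_pos)
  ultimately show ?thesis by blast
qed

lemma phi_le_max_resid_div_rho:
  "\<exists>L\<ge>0. \<forall>k M. (\<forall>i\<in>{1..n}. resid k i / rho k i \<le> M) \<longrightarrow> phi k \<le> L * M"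
proof -
  obtain zs ws where sol: "extended_solution zs ws" using extended_solution_exists by blast
  obtain R where R: "R \<ge> 0" "\<forall>k. norm (z k - zs) \<le> R \<and> (\<forall>i\<in>{1..n-1}. norm (w k i - ws i) \<le> R)"
    using iterates_bounded[OF sol] by blast
  obtain K where K: "K > 0" "\<forall>k M. (\<forall>i\<in>{1..n}. resid k i / rho k i \<le> M) \<longrightarrow>
      norm (v k) \<le> K * M \<and> (\<forall>i\<in>{1..n-1}. norm (u k i) \<le> K * M)"
    using v_u_le by blast
  have "phi k \<le> R * K * real n * M" if M: "\<forall>i\<in>{1..n}. resid k i / rho k i \<le> M" for k M
  proof -
    have v: "norm (v k) \<le> K * M" and u: "\<forall>i\<in>{1..n-1}. norm (u k i) \<le> K * M"
      using K(2) M by blast+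
    have "phi k \<le> phi k - phi_at zs ws k" using phi_at_nonpos[OF sol, of k] by simp
    also have "\<dots> = inner (z k - zs) (v k) + (\<Sum>i=1..n-1. inner (w k i - ws i) (u k i))"
      using phi_sub_phi_at[OF sol] .
    also have "\<dots> \<le> R * (K * M) + (\<Sum>i=1..n-1. R * (K * M))"
    proof (rule add_mono)
      show "inner (z k - zs) (v k) \<le> R * (K * M)"
        using norm_cauchy_schwarz[of "z k - zs" "v k"] mult_mono[of "norm (z k - zs)" R "norm (v k)" "K * M"]
          R v by simp
      show "(\<Sum>i=1..n-1. inner (w k i - ws i) (u k i)) \<le> (\<Sum>i=1..n-1. R * (K * M))"
      proof (rule sum_mono)
        fix i assume i: "i \<in> {1..n-1}"
        show "inner (w k i - ws i) (u k i) \<le> R * (K * M)"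
          using norm_cauchy_schwarz[of "w k i - ws i" "u k i"]
            mult_mono[of "norm (w k i - ws i)" R "norm (u k i)" "K * M"] R u i by simp
      qed
    qed
    also have "\<dots> = R * K * real n * M" using n2 by (simp add: algebra_simps of_nat_diff)
    finally show ?thesis .
  qed
  moreover have "0 \<le> R * K * real n" using R K by simp
  ultimately show ?thesis by blast
qed

text \<open>Compare the two bounds on \<open>\<phi>\<^sub>k\<close> at an index \<open>j\<close> maximising \<open>d\<^sub>j / \<rho>\<^sub>j =: M\<close>:
\<open>\<kappa> d\<^sub>j M = \<kappa> d\<^sub>j\<^sup>2 / \<rho>\<^sub>j \<le> \<phi>\<^sub>k \<le> L M\<close> bounds \<open>d\<^sub>j\<close>, hence \<open>\<rho>\<^sub>j\<close> from below, hence \<open>M\<close>.\<close>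

lemma resid_div_rho_bounded: "\<exists>B\<ge>0. \<forall>k. \<forall>i\<in>{1..n}. resid k i / rho k i \<le> B"
proof -
  obtain \<kappa> where \<kappa>: "\<kappa> > 0" "\<forall>i\<in>{1..n}. \<forall>k. \<kappa> * (resid k i)\<^sup>2 / rho k i \<le> phi k"
    using phi_ge_resid by blast
  obtain L where L: "L \<ge> 0" "\<forall>k M. (\<forall>i\<in>{1..n}. resid k i / rho k i \<le> M) \<longrightarrow> phi k \<le> L * M"
    using phi_le_max_resid_div_rho by blast
  have L\<kappa>: "0 \<le> L / \<kappa>" using L \<kappa> by simp
  obtain r where r: "r > 0" "\<forall>i\<in>{1..n}. \<forall>k. resid k i \<le> L / \<kappa> \<longrightarrow> r \<le> rho k i"
    using rho_lower_bound[OF L\<kappa>] by blast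
  have "resid k i / rho k i \<le> L / \<kappa> / r" if i: "i \<in> {1..n}" for k i
  proof -
    define M where "M = Max ((\<lambda>i. resid k i / rho k i) ` {1..n})"
    have M_ge: "\<forall>i\<in>{1..n}. resid k i / rho k i \<le> M" unfolding M_def by simp
    have "M \<in> (\<lambda>i. resid k i / rho k i) ` {1..n}"
      unfolding M_def using n2 by (intro Max_in) auto
    then obtain j where j: "j \<in> {1..n}" "resid k j / rho k j = M" by auto
    have \<rho>: "0 < rho k j" using rho_pos[OF j(1)] .
    have "M \<le> L / \<kappa> / r"
    proof (cases "M \<le> 0")
      case True
      then show ?thesis using L\<kappa> r by (smt (verit) divide_nonneg_pos)
    next
      case False
      have "\<kappa> * resid k j * M = \<kappa> * (resid k j)\<^sup>2 / rho k j"
        using j(2) \<rho> by (auto simp: power2_eq_square field_simps)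
      also have "\<dots> \<le> L * M" using \<kappa>(2) j(1) L(2) M_ge by (meson order_trans)
      finally have "\<kappa> * resid k j \<le> L" using False by simp
      then have "resid k j \<le> L / \<kappa>" using \<kappa>(1) by (simp add: field_simps)
      then have "r \<le> rho k j" using r j(1) by blast
      then show ?thesis
        using j(2) \<open>resid k j \<le> L / \<kappa>\<close> r(1) L\<kappa> unfolding resid_def by (metis frac_le norm_ge_zero)
    qed
    then show ?thesis using M_ge i by (meson order_trans)
  qed
  moreover have "0 \<le> L / \<kappa> / r" using L(1) \<kappa>(1) r(1) by simp
  ultimately show ?thesis by blast
qed

lemma pik_bounded: "\<exists>P\<ge>0. \<forall>k. pik k \<le> P"
proof -
  obtain B where B: "B \<ge> 0" "\<forall>k. \<forall>i\<in>{1..n}. resid k i / rho k i \<le> B"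
    using resid_div_rho_bounded by blast
  obtain K where K: "\<forall>k M. (\<forall>i\<in>{1..n}. resid k i / rho k i \<le> M) \<longrightarrow>
      norm (v k) \<le> K * M \<and> (\<forall>i\<in>{1..n-1}. norm (u k i) \<le> K * M)"
    using v_u_le by blast
  have "pik k \<le> (1 / gamma) * (K * B)\<^sup>2 + (\<Sum>i=1..n-1. (K * B)\<^sup>2)" for k
  proof -
    have "norm (v k) \<le> K * B" and u: "\<forall>i\<in>{1..n-1}. norm (u k i) \<le> K * B" using K B by blast+
    then have "(1 / gamma) * (norm (v k))\<^sup>2 \<le> (1 / gamma) * (K * B)\<^sup>2"
      using params by (intro mult_left_mono power_mono) auto
    moreover have "(\<Sum>i=1..n-1. (norm (u k i))\<^sup>2) \<le> (\<Sum>i=1..n-1. (K * B)\<^sup>2)"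
      using u by (intro sum_mono power_mono) auto
    ultimately show ?thesis unfolding pi_def[rule_format] by simp
  qed
  moreover have "0 \<le> (1 / gamma) * (K * B)\<^sup>2 + (\<Sum>i=1..n-1. (K * B)\<^sup>2)"
    using params by (simp add: sum_nonneg)
  ultimately show ?thesis by blast
qed

lemma pik_le_square: "\<exists>\<xi>>0. \<forall>k. pik k \<le> \<xi>\<^sup>2"
proof -
  obtain P where P: "P \<ge> 0" "\<forall>k. pik k \<le> P" using pik_bounded by blast
  have "P \<le> (sqrt P + 1)\<^sup>2" using P(1) by (simp add: power2_eq_square algebra_simps)
  moreover have "sqrt P + 1 > 0" using P(1) by (smt (verit) real_sqrt_ge_zero)
  ultimately show ?thesis using P(2) by (meson order_trans)
qed

lemma descent_summable: "summable descent"
proof -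
  obtain zs ws where sol: "extended_solution zs ws" using extended_solution_exists by blast
  have "(\<Sum>k<K. descent k) \<le> sq_dist zs ws 0" for K
  proof -
    have "(\<Sum>k<K. descent k) \<le> (\<Sum>k<K. sq_dist zs ws k - sq_dist zs ws (Suc k))"
      using sq_dist_Suc_le[OF sol] by (intro sum_mono) (smt (verit))
    also have "\<dots> = sq_dist zs ws 0 - sq_dist zs ws K" by (rule sum_lessThan_telescope')
    also have "\<dots> \<le> sq_dist zs ws 0" using sq_dist_nonneg[of zs ws K] by simp
    finally show ?thesis .
  qed
  then show ?thesis using descent_nonneg by (intro summableI_nonneg_bounded)
qed

text \<open>Since \<open>\<pi>\<^sub>k\<close> is bounded, \<open>\<phi>\<^sub>k\<^sup>2 \<le> const \<cdot> descent k\<close>, and the descents are summable.\<close>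

lemma phi_tendsto_zero: "phi \<longlonglongrightarrow> 0"
proof -
  obtain P where P: "P \<ge> 0" "\<forall>k. pik k \<le> P" using pik_bounded by blast
  define c where "c = tau_lo * (2 - tau_up)"
  have c: "c > 0" unfolding c_def using params by simp
  have "norm (phi k) \<le> sqrt (P / c * descent k)" for k
  proof (cases "0 < phi k")
    case True
    then have "descent k = c * (phi k)\<^sup>2 / pik k" unfolding descent_def c_def by simp
    then have "(phi k)\<^sup>2 = pik k / c * descent k" using pik_pos[OF True] c by (simp add: field_simps)
    also have "\<dots> \<le> P / c * descent k"
      using P c descent_nonneg[of k] by (intro mult_right_mono divide_right_mono) auto
    finally show ?thesis using phi_nonneg[of k] by (simp add: real_le_rsqrt)
  next
    case False
    then show ?thesis using phi_nonneg[of k] P c descent_nonneg[of k] by simp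
  qed
  moreover have "(\<lambda>k. sqrt (P / c * descent k)) \<longlonglongrightarrow> 0"
    using tendsto_real_sqrt[OF tendsto_mult_right_zero[OF summable_LIMSEQ_zero[OF descent_summable],
        of "P / c"]] by (simp only: real_sqrt_zero)
  ultimately show ?thesis by (rule null_sequence_if_norm_le)
qed

lemma resid_tendsto_zero:
  assumes i: "i \<in> {1..n}"
  shows "(\<lambda>k. resid k i) \<longlonglongrightarrow> 0"
proof -
  obtain \<kappa> where \<kappa>: "\<kappa> > 0" "\<forall>i\<in>{1..n}. \<forall>k. \<kappa> * (resid k i)\<^sup>2 / rho k i \<le> phi k"
    using phi_ge_resid by blast
  obtain R where R: "R > 0" "\<forall>k. \<forall>i\<in>{1..n}. rho k i \<le> R" using rho_bounded by blast
  have "norm (resid k i) \<le> sqrt (R / \<kappa> * phi k)" for k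
  proof -
    have "\<kappa> * (resid k i)\<^sup>2 / R \<le> \<kappa> * (resid k i)\<^sup>2 / rho k i"
      using R i rho_pos[OF i, of k] \<kappa>(1) by (intro divide_left_mono) auto
    then have "\<kappa> * (resid k i)\<^sup>2 / R \<le> phi k" using \<kappa>(2) i by (meson order_trans)
    then have "(resid k i)\<^sup>2 \<le> R / \<kappa> * phi k" using R \<kappa>(1) by (simp add: field_simps)
    then show ?thesis unfolding resid_def by (simp add: real_le_rsqrt)
  qed
  moreover have "(\<lambda>k. sqrt (R / \<kappa> * phi k)) \<longlonglongrightarrow> 0"
    using tendsto_real_sqrt[OF tendsto_mult_right_zero[OF phi_tendsto_zero, of "R / \<kappa>"]]
    by (simp only: real_sqrt_zero)
  ultimately show ?thesis by (rule null_sequence_if_norm_le)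
qed

lemma rho_ge_uniform: "\<exists>r>0. \<forall>i\<in>{1..n}. \<forall>k. r \<le> rho k i"
proof -
  obtain B where B: "B \<ge> 0" "\<forall>k. \<forall>i\<in>{1..n}. resid k i / rho k i \<le> B"
    using resid_div_rho_bounded by blast
  obtain R where R: "R > 0" "\<forall>k. \<forall>i\<in>{1..n}. rho k i \<le> R" using rho_bounded by blast
  have "resid k i \<le> R * B" if i: "i \<in> {1..n}" for k i
  proof -
    have "resid k i = rho k i * (resid k i / rho k i)" using rho_pos[OF i, of k] by simp
    also have "\<dots> \<le> R * B"
      using B R i rho_pos[OF i, of k] unfolding resid_def by (intro mult_mono) auto
    finally show ?thesis .
  qed
  then show ?thesis using rho_lower_bound[of "R * B"] R B by (metis less_imp_le mult_nonneg_nonneg)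
qed

lemma resid_div_rho_tendsto_zero:
  assumes i: "i \<in> {1..n}"
  shows "(\<lambda>k. resid k i / rho k i) \<longlonglongrightarrow> 0"
proof -
  obtain r where r: "r > 0" "\<forall>i\<in>{1..n}. \<forall>k. r \<le> rho k i" using rho_ge_uniform by blast
  have "norm (resid k i / rho k i) \<le> resid k i / r" for k
    using r i rho_pos[OF i, of k] unfolding resid_def by (simp add: frac_le)
  moreover have "(\<lambda>k. resid k i / r) \<longlonglongrightarrow> 0" using resid_tendsto_zero[OF i] by (rule tendsto_divide_zero)
  ultimately show ?thesis by (rule null_sequence_if_norm_le)
qed

lemma G_z_sub_x_tendsto_zero:
  assumes "i \<in> {1..n}"
  shows "(\<lambda>k. G i (z k) - x k i) \<longlonglongrightarrow> 0"
  using resid_tendsto_zero[OF assms] unfolding resid_def tendsto_norm_zero_iff .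

lemma w_sub_y_tendsto_zero:
  assumes i: "i \<in> {1..n}"
  shows "(\<lambda>k. w k i - y k i) \<longlonglongrightarrow> 0"
proof -
  obtain K where K: "\<forall>i\<in>{1..n}. \<forall>k. norm (y k i - w k i) \<le> K * (resid k i / rho k i)"
    using y_sub_w_le by blast
  have "norm (w k i - y k i) \<le> K * (resid k i / rho k i)" for k
    using K i by (simp add: norm_minus_commute)
  then show ?thesis
    using tendsto_mult_right_zero[OF resid_div_rho_tendsto_zero[OF i]] by (rule null_sequence_if_norm_le)
qed

lemma sum_resid_div_rho_tendsto_zero: "(\<lambda>k. \<Sum>j=1..n. resid k j / rho k j) \<longlonglongrightarrow> 0"
proof -
  have "(\<lambda>k. \<Sum>j=1..n. resid k j / rho k j) \<longlonglongrightarrow> (\<Sum>j=1..n. 0)"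
    using resid_div_rho_tendsto_zero by (intro tendsto_sum) blast
  then show ?thesis by simp
qed

lemma v_u_le_sum:
  obtains K where "\<And>k. norm (v k) \<le> K * (\<Sum>j=1..n. resid k j / rho k j)"
    "\<And>k i. i \<in> {1..n-1} \<Longrightarrow> norm (u k i) \<le> K * (\<Sum>j=1..n. resid k j / rho k j)"
proof -
  have "resid k i / rho k i \<le> (\<Sum>j=1..n. resid k j / rho k j)" if "i \<in> {1..n}" for k i
  proof (rule member_le_sum[OF that])
    show "0 \<le> resid k j / rho k j" if "j \<in> {1..n} - {i}" for j
      using rho_pos[of j k] that unfolding resid_def by simp
  qed simp
  moreover obtain K where "\<forall>k M. (\<forall>i\<in>{1..n}. resid k i / rho k i \<le> M) \<longrightarrow>
      norm (v k) \<le> K * M \<and> (\<forall>i\<in>{1..n-1}. norm (u k i) \<le> K * M)"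
    using v_u_le by blast
  ultimately show ?thesis using that[of K] by presburger
qed

lemma v_tendsto_zero: "v \<longlonglongrightarrow> 0"
proof -
  obtain K where K: "\<And>k. norm (v k) \<le> K * (\<Sum>j=1..n. resid k j / rho k j)"
    "\<And>k i. i \<in> {1..n-1} \<Longrightarrow> norm (u k i) \<le> K * (\<Sum>j=1..n. resid k j / rho k j)"
    using v_u_le_sum by blast
  show ?thesis
    using K(1) tendsto_mult_right_zero[OF sum_resid_div_rho_tendsto_zero] by (rule null_sequence_if_norm_le)
qed

lemma u_tendsto_zero:
  assumes "i \<in> {1..n-1}"
  shows "(\<lambda>k. u k i) \<longlonglongrightarrow> 0"
proof -
  obtain K where K: "\<And>k. norm (v k) \<le> K * (\<Sum>j=1..n. resid k j / rho k j)"
    "\<And>k i. i \<in> {1..n-1} \<Longrightarrow> norm (u k i) \<le> K * (\<Sum>j=1..n. resid k j / rho k j)"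
    using v_u_le_sum by blast
  show ?thesis
    using K(2)[OF assms] tendsto_mult_right_zero[OF sum_resid_div_rho_tendsto_zero]
    by (rule null_sequence_if_norm_le)
qed
end

theorem lemma4p6:
  fixes n :: nat
    and H :: "nat \<Rightarrow> 'a::{real_inner,complete_space} set"
    and G Gadj :: "nat \<Rightarrow> 'a \<Rightarrow> 'a"
    and A :: "nat \<Rightarrow> 'a \<Rightarrow> 'a set"
    and B C D :: "nat \<Rightarrow> 'a \<Rightarrow> 'a"
    and D' :: "nat \<Rightarrow> 'a \<Rightarrow> 'a \<Rightarrow> 'a"
    and ell m :: "nat \<Rightarrow> real"
    and beta :: "nat \<Rightarrow> ereal"
    and ID :: "nat set"
    and z :: "nat \<Rightarrow> 'a"
    and w x y u :: "nat \<Rightarrow> nat \<Rightarrow> 'a"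
    and rho :: "nat \<Rightarrow> nat \<Rightarrow> real"
    and v :: "nat \<Rightarrow> 'a"
    and phi pik tau alpha :: "nat \<Rightarrow> real"
    and tau_lo tau_up theta_lo theta_up rho_hat delta_hat gamma :: real
  assumes n2: "n \<ge> 2"
    and H_sub: "\<forall>i\<le>n. subspace (H i) \<and> closed (H i)"
    and H_n: "H n = H 0"
    and A1: "\<forall>i\<in>{1..n}. bounded_linear (G i) \<and> G i ` H 0 \<subseteq> H i"
    and A1n: "\<forall>p\<in>H 0. G n p = p"
    and adj: "\<forall>i\<in>{1..n}. \<forall>q\<in>H i. Gadj i q \<in> H 0 \<and>
                (\<forall>p\<in>H 0. inner (Gadj i q) p = inner q (G i p))"
    and A2: "\<forall>i\<in>{1..n}. max_mono_op (H i) (A i)"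
    and A3: "\<forall>i\<in>{1..n}. mono_fun (H i) (B i) \<and> 0 \<le> ell i \<and>
                (\<forall>p\<in>H i. \<forall>q\<in>H i. norm (B i p - B i q) \<le> ell i * norm (p - q))"
    and A4: "\<forall>i\<in>{1..n}. 0 < beta i \<and> cocoercive (H i) (beta i) (C i)"
    and A5: "\<forall>i\<in>{1..n}. mono_fun (H i) (D i) \<and> 0 \<le> m i \<and>
                (\<forall>p\<in>H i. (D i has_derivative D' i p) (at p within H i)) \<and>
                (\<forall>p\<in>H i. \<forall>q\<in>H i. \<forall>h\<in>H i.
                    norm (D' i p h - D' i q h) \<le> m i * norm (p - q) * norm h)"
    and A6: "\<exists>zs\<in>H 0. \<exists>ws. (\<forall>i\<in>{1..n}. ws i \<in> op_sum (A i) (B i) (C i) (D i) (G i zs)) \<and>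
                (\<Sum>i=1..n. Gadj i (ws i)) = 0"
    and A7: "ID \<subseteq> {1..n} \<and> (\<forall>i\<in>ID. 0 < m i) \<and>
                (\<forall>i\<in>{1..n} - ID. m i = 0 \<and> (\<forall>p\<in>H i. D i p = 0))"
    and params: "0 < tau_lo \<and> tau_lo < tau_up \<and> tau_up < 2 \<and>
                 0 < theta_lo \<and> theta_lo < theta_up \<and> theta_up < 2 \<and>
                 0 < rho_hat \<and> 0 < delta_hat \<and> 0 < gamma"
    and init: "z 0 \<in> H 0 \<and> (\<forall>i\<in>{1..n-1}. w 0 i \<in> H i)"
    and w_n: "\<forall>k. w k n = - (\<Sum>i=1..n-1. Gadj i (w k i))"
    and case_i: "\<forall>k. \<forall>i\<in>{1..n}. w k i \<in> op_sum (A i) (B i) (C i) (D i) (G i (z k)) \<longrightarrow>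
                   rho k i = rho_hat \<and> x k i = G i (z k) \<and> y k i = w k i"
    and case_ii: "\<forall>k. \<forall>i\<in>ID. w k i \<notin> op_sum (A i) (B i) (C i) (D i) (G i (z k)) \<longrightarrow>
                   0 < rho k i \<and>
                   x k i \<in> resolvent (op_scale (rho k i) (op_add (A i) (lin_at (D i) (D' i) (G i (z k)))))
                      (G i (z k) + rho k i *\<^sub>R w k i - rho k i *\<^sub>R (B i (G i (z k)) + C i (G i (z k)))) \<and>
                   theta_lo \<le> 4 * (ell i)\<^sup>2 * (rho k i)\<^sup>2 + (real_of_ereal (inverse (beta i)) + delta_hat) * rho k i
                              + (m i * rho k i * norm (x k i - G i (z k)))\<^sup>2 \<and>
                   4 * (ell i)\<^sup>2 * (rho k i)\<^sup>2 + (real_of_ereal (inverse (beta i)) + delta_hat) * rho k i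
                              + (m i * rho k i * norm (x k i - G i (z k)))\<^sup>2 \<le> theta_up \<and>
                   y k i = (1 / rho k i) *\<^sub>R (G i (z k) - x k i) + w k i
                           + (B i (x k i) - B i (G i (z k)))
                           + (D i (x k i) - lin_at (D i) (D' i) (G i (z k)) (x k i))"
    and case_iii: "\<forall>k. \<forall>i\<in>{1..n} - ID. w k i \<notin> op_sum (A i) (B i) (C i) (D i) (G i (z k)) \<longrightarrow>
                   0 < rho k i \<and>
                   x k i \<in> resolvent (op_scale (rho k i) (A i))
                      (G i (z k) + rho k i *\<^sub>R w k i - rho k i *\<^sub>R (B i (G i (z k)) + C i (G i (z k)))) \<and>
                   y k i = (1 / rho k i) *\<^sub>R (G i (z k) - x k i) + w k i
                           + (B i (x k i) - B i (G i (z k)))"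
    and u_def: "\<forall>k. \<forall>i\<in>{1..n-1}. u k i = x k i - G i (x k n)"
    and v_def: "\<forall>k. v k = (\<Sum>i=1..n. Gadj i (y k i))"
    and phi_def: "\<forall>k. phi k = inner (z k) (v k) + (\<Sum>i=1..n-1. inner (w k i) (u k i))
                   - (\<Sum>i=1..n. inner (x k i) (y k i)
                        + real_of_ereal (1 / (4 * beta i)) * (norm (x k i - G i (z k)))\<^sup>2)"
    and pi_def: "\<forall>k. pik k = (1 / gamma) * (norm (v k))\<^sup>2 + (\<Sum>i=1..n-1. (norm (u k i))\<^sup>2)"
    and update: "\<forall>k. (0 < phi k \<longrightarrow>
                      tau_lo \<le> tau k \<and> tau k \<le> tau_up \<and> alpha k = tau k * phi k / pik k \<and>
                      z (Suc k) = z k - (alpha k / gamma) *\<^sub>R v k \<and>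
                      (\<forall>i\<in>{1..n-1}. w (Suc k) i = w k i - alpha k *\<^sub>R u k i)) \<and>
                    (\<not> 0 < phi k \<longrightarrow> z (Suc k) = z k \<and> (\<forall>i\<in>{1..n-1}. w (Suc k) i = w k i))"
    and A8: "\<forall>i\<in>{1..n} - ID. \<exists>rlo rup. 0 < rlo \<and> rlo \<le> rup \<and>
                ereal rup < 1 / (1 / (4 * beta i) + ereal (ell i)) \<and>
                (\<forall>k. w k i \<notin> op_sum (A i) (B i) (C i) (D i) (G i (z k)) \<longrightarrow>
                      rlo \<le> rho k i \<and> rho k i \<le> rup)"
  shows "(\<exists>xi>0. \<forall>k. pik k \<le> xi\<^sup>2) \<and>
         (\<forall>i\<in>{1..n}. (\<lambda>k. G i (z k) - x k i) \<longlonglongrightarrow> 0 \<and> (\<lambda>k. w k i - y k i) \<longlonglongrightarrow> 0) \<and>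
         (\<lambda>k. \<Sum>i=1..n. Gadj i (y k i)) \<longlonglongrightarrow> 0 \<and>
         (\<forall>i\<in>{1..n-1}. (\<lambda>k. x k i - G i (x k n)) \<longlonglongrightarrow> 0)"
proof -
  interpret projective_splitting n H G Gadj A B C D D' ell m beta ID z w x y u rho v phi pik tau alpha
    tau_lo tau_up theta_lo theta_up rho_hat delta_hat gamma
    by (rule projective_splitting.intro; fact assms)
  have "(\<lambda>k. \<Sum>i=1..n. Gadj i (y k i)) = v"
    using v_def by (simp add: fun_eq_iff)
  moreover have "(\<lambda>k. x k i - G i (x k n)) = (\<lambda>k. u k i)" if "i \<in> {1..n-1}" for i
    using u_def that by (simp add: fun_eq_iff)
  ultimately show ?thesis
    using pik_le_square G_z_sub_x_tendsto_zero w_sub_y_tendsto_zero v_tendsto_zero u_tendsto_zero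
    by simp
qed

end
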